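(* Fix partitions $\mu\subseteq\lambda$, and let $T$ be an SSYT of shape $\lambda^+/\mu^-$ where $\lambda^+/\lambda$ is a horizontal strip and $\mu/\mu^-$ is a vertical strip. Suppose that the downward path of $T$, if it exists, exits right. Then $\mathrm{D}(T)$ is an SSYT of shape $\lambda'/\mu'$ where $\lambda'/\lambda$ is a horizontal strip and $\mu/\mu'$ is a vertical strip.
   Context: Diagrams are in French notation: a partition $\lambda$ is the set of cells in columns $i$ and rows $j$ (rows numbered from the bottom starting at 1) with $1\le i\le\lambda_j$; $\lambda/\mu$ is the set difference. An SSYT of skew shape has positive integer entries weakly increasing left to right in rows and strictly increasing bottom to top in columns. A horizontal (vertical) strip is a skew shape with no two cells in a common column (row). An outside corner of $T$ is a cell with no cell of $T$ immediately above or immediately right of it. Row insertion: to insert a value $x$ starting at row $j$: if $x$ is weakly larger than all entries of row $j$ (or row $j$ is empty), put $x$ in a new cell at the right end of row $j$ (if the row is empty and the shape is $\alpha/\beta$, in column $\alpha_j+1$) and stop; otherwise replace the entry $y$ of the leftmost cell of row $j$ with entry $>x$ by $x$ and insert $y$ starting at row $j+1$. External insertion $T\leftarrow_0 k$ starts at row 1. Reverse row insertion $T\rightarrow c$, $c$ an outside corner in row $j$ with entry $k$: delete $c$ and reverse-insert $x=k$ into row $j-1$, where reverse-inserting $x$ into row $r$ means: if $r=0$ stop ($x$ lands in row 0); else if $x$ is weakly smaller than all entries of row $r$, place $x$ in a new cell immediately left of the leftmost cell of row $r$ and stop ($x$ lands in row $r$); else replace the entry $y$ of the rightmost cell of row $r$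 with entry $<x$ by $x$ and reverse-insert $y$ into row $r-1$. The value at termination is the final entry. The reverse bumping path is the set of cells (including cells present in only one tableau) where the tableaux before and after differ. Downward slide: let $c_1,\dots,c_p$ be the cells of $\lambda^+/\lambda$ from right to left, $T_0=T$, $T_i=T_{i-1}\rightarrow c_i$ with final entry $k_i$ and reverse bumping path $B_i$. Let $m$ be the least $i$ such that $k_i$ lands in a row $\ge1$, and $m'=m-1$; if none exists, $m=m'=p$. Then $\mathrm{D}(T)=(\cdots((T_m\leftarrow_0 k_{m'})\leftarrow_0 k_{m'-1})\cdots)\leftarrow_0 k_1$. If such $m$ exists, the downward path of $T$ is $B_m$ (otherwise $T$ has no downward path); it exits right if its lowest cell lies in a row strictly below every cell of $\mu/\mu^-$. *)

theory Defs
  imports Main "HOL-Library.Product_Lexorder"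
begin

section \<open>Partitions and diagrams (French notation)\<close>

text \<open>A partition is a weakly decreasing list of positive integers; its j-th part
  (rows numbered from 1) is pt lam j, which is 0 beyond the length.
  A cell is a pair (i, j): column i, row j.\<close>

definition is_partition :: "nat list \<Rightarrow> bool" where
  "is_partition l \<longleftrightarrow> sorted_wrt (\<ge>) l \<and> (\<forall>x\<in>set l. 0 < x)"

definition pt :: "nat list \<Rightarrow> nat \<Rightarrow> nat" where
  "pt l j = (if 1 \<le> j \<and> j \<le> length l then l ! (j - 1) else 0)"

definition diagram :: "nat list \<Rightarrow> (nat \<times> nat) set" where
  "diagram l = {(i, j). 1 \<le> j \<and> 1 \<le> i \<and> i \<le> pt l j}"

definition hstrip :: "nat list \<Rightarrow> nat list \<Rightarrow> bool" where
  "hstrip outer inner \<longleftrightarrow> diagram inner \<subseteq> diagram outer \<and>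
     (\<forall>c\<in>diagram outer - diagram inner. \<forall>d\<in>diagram outer - diagram inner.
        fst c = fst d \<longrightarrow> c = d)"

definition vstrip :: "nat list \<Rightarrow> nat list \<Rightarrow> bool" where
  "vstrip outer inner \<longleftrightarrow> diagram inner \<subseteq> diagram outer \<and>
     (\<forall>c\<in>diagram outer - diagram inner. \<forall>d\<in>diagram outer - diagram inner.
        snd c = snd d \<longrightarrow> c = d)"

text \<open>A (skew) tableau carries its shape: element j-1 of the list describes row j as a pair
  (b, r), where b is the length of row j of the inner shape and r is the list of entries of
  row j from left to right, occupying columns b+1, ..., b + length r.\<close>

type_synonym tab = "(nat \<times> nat list) list"

definition rowof :: "tab \<Rightarrow> nat \<Rightarrow> nat \<times> nat list" where
  "rowof T j = (if 1 \<le> j \<and> j \<le> length T then T ! (j - 1) else (0, []))"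

definition setrow :: "nat \<Rightarrow> nat \<times> nat list \<Rightarrow> tab \<Rightarrow> tab" where
  "setrow j row T = (if j \<le> length T then T[j - 1 := row]
                     else T @ replicate (j - 1 - length T) (0, []) @ [row])"

definition cellmap :: "tab \<Rightarrow> nat \<times> nat \<Rightarrow> nat option" where
  "cellmap T c = (case c of (i, j) \<Rightarrow> (case rowof T j of (b, r) \<Rightarrow>
      if 1 \<le> j \<and> b < i \<and> i \<le> b + length r then Some (r ! (i - b - 1)) else None))"

definition is_ssyt :: "tab \<Rightarrow> bool" where
  "is_ssyt T \<longleftrightarrow>
     (\<forall>c a. cellmap T c = Some a \<longrightarrow> 0 < a) \<and>
     (\<forall>i i' j a a'. i < i' \<longrightarrow> cellmap T (i, j) = Some a \<longrightarrow> cellmap T (i', j) = Some a'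
        \<longrightarrow> a \<le> a') \<and>
     (\<forall>i j j' a a'. j < j' \<longrightarrow> cellmap T (i, j) = Some a \<longrightarrow> cellmap T (i, j') = Some a'
        \<longrightarrow> a < a')"

definition ssyt_of_shape :: "tab \<Rightarrow> nat list \<Rightarrow> nat list \<Rightarrow> bool" where
  "ssyt_of_shape T lam mu \<longleftrightarrow> diagram mu \<subseteq> diagram lam \<and>
     (\<forall>j\<ge>1. fst (rowof T j) = pt mu j \<and> fst (rowof T j) + length (snd (rowof T j)) = pt lam j) \<and>
     is_ssyt T"

lemma length_setrow_le: "1 \<le> j \<Longrightarrow> j \<le> length T \<Longrightarrow> length (setrow j row T) = length T"
  by (simp add: setrow_def)

function ins :: "nat \<Rightarrow> nat \<Rightarrow> tab \<Rightarrow> tab" where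
  "ins x j T = (if j = 0 then T else
     (case rowof T j of (b, r) \<Rightarrow>
       if (\<forall>y\<in>set r. y \<le> x) then setrow j (b, r @ [x]) T
       else (let k = Min {k. k < length r \<and> x < r ! k} in
         ins (r ! k) (Suc j) (setrow j (b, r[k := x]) T))))"
  by pat_completeness auto
termination
  apply (relation "measure (\<lambda>(x, j, T). Suc (length T) - j)")
   apply simp
  apply (clarsimp simp: length_setrow_le)
  subgoal for x j T b r
    by (cases "j \<le> length T") (auto simp: rowof_def setrow_def)
  done

declare ins.simps [simp del]

definition ext_ins :: "tab \<Rightarrow> nat \<Rightarrow> tab" where
  "ext_ins T k = ins k 1 T"

text \<open>revins x r T reverse-inserts x into row r; it returns the resulting tableau,
  the row in which x lands (0 if it lands in row 0), and the final value.\<close>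

fun revins :: "nat \<Rightarrow> nat \<Rightarrow> tab \<Rightarrow> tab \<times> nat \<times> nat" where
  "revins x 0 T = (T, 0, x)"
| "revins x (Suc r) T = (case rowof T (Suc r) of (b, row) \<Rightarrow>
     if (\<forall>y\<in>set row. x \<le> y) then (setrow (Suc r) (b - 1, x # row) T, Suc r, x)
     else (let k = Max {k. k < length row \<and> row ! k < x} in
       revins (row ! k) r (setrow (Suc r) (b, row[k := x]) T)))"

text \<open>Reverse row insertion at an outside corner c in row j: c is the rightmost cell of row j;
  delete it and reverse-insert its entry into row j - 1.\<close>

definition rev_corner :: "tab \<Rightarrow> nat \<times> nat \<Rightarrow> tab \<times> nat \<times> nat" where
  "rev_corner T c = (let j = snd c; (b, row) = rowof T j in
      revins (last row) (j - 1) (setrow j (b, butlast row) T))"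

definition bump_path :: "tab \<Rightarrow> tab \<Rightarrow> (nat \<times> nat) set" where
  "bump_path T T' = {c. cellmap T c \<noteq> cellmap T' c}"

text \<open>The cells of lamp/lam listed from right to left (for a horizontal strip the columns are
  distinct, so lexicographic order on (column,row) is the left-to-right order).\<close>

definition strip_cells :: "nat list \<Rightarrow> nat list \<Rightarrow> (nat \<times> nat) list" where
  "strip_cells lamp lam = rev (sorted_list_of_set (diagram lamp - diagram lam))"

text \<open>Element i-1 of the result is (T_i, k_i, landing row of k_i, B_i).\<close>

fun slide_steps :: "tab \<Rightarrow> (nat \<times> nat) list \<Rightarrow> (tab \<times> nat \<times> nat \<times> (nat \<times> nat) set) list" where
  "slide_steps T [] = []"
| "slide_steps T (c # cs) = (case rev_corner T c of (T', l, k) \<Rightarrow>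
     (T', k, l, bump_path T T') # slide_steps T' cs)"

definition steps :: "nat list \<Rightarrow> nat list \<Rightarrow> tab \<Rightarrow> (tab \<times> nat \<times> nat \<times> (nat \<times> nat) set) list" where
  "steps lamp lam T = slide_steps T (strip_cells lamp lam)"

definition step_tab :: "nat list \<Rightarrow> nat list \<Rightarrow> tab \<Rightarrow> nat \<Rightarrow> tab" where
  "step_tab lamp lam T i = (if i = 0 then T else fst (steps lamp lam T ! (i - 1)))"

definition step_val :: "nat list \<Rightarrow> nat list \<Rightarrow> tab \<Rightarrow> nat \<Rightarrow> nat" where
  "step_val lamp lam T i = fst (snd (steps lamp lam T ! (i - 1)))"

definition step_row :: "nat list \<Rightarrow> nat list \<Rightarrow> tab \<Rightarrow> nat \<Rightarrow> nat" where
  "step_row lamp lam T i = fst (snd (snd (steps lamp lam T ! (i - 1))))"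

definition step_path :: "nat list \<Rightarrow> nat list \<Rightarrow> tab \<Rightarrow> nat \<Rightarrow> (nat \<times> nat) set" where
  "step_path lamp lam T i = snd (snd (snd (steps lamp lam T ! (i - 1))))"

definition has_down_path :: "nat list \<Rightarrow> nat list \<Rightarrow> tab \<Rightarrow> bool" where
  "has_down_path lamp lam T \<longleftrightarrow>
     (\<exists>i. 1 \<le> i \<and> i \<le> length (steps lamp lam T) \<and> 1 \<le> step_row lamp lam T i)"

definition down_m :: "nat list \<Rightarrow> nat list \<Rightarrow> tab \<Rightarrow> nat" where
  "down_m lamp lam T = (if has_down_path lamp lam T
     then (LEAST i. 1 \<le> i \<and> i \<le> length (steps lamp lam T) \<and> 1 \<le> step_row lamp lam T i)
     else length (steps lamp lam T))"

definition down_m' :: "nat list \<Rightarrow> nat list \<Rightarrow> tab \<Rightarrow> nat" where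
  "down_m' lamp lam T = (if has_down_path lamp lam T then down_m lamp lam T - 1
     else length (steps lamp lam T))"

definition down_slide :: "nat list \<Rightarrow> nat list \<Rightarrow> tab \<Rightarrow> tab" where
  \<comment> \<open>D(T) for T of shape lamp/_ with lamp/lam the horizontal strip\<close>
  "down_slide lamp lam T =
     foldl (\<lambda>U i. ext_ins U (step_val lamp lam T i))
       (step_tab lamp lam T (down_m lamp lam T)) (rev [1..<Suc (down_m' lamp lam T)])"

definition down_path :: "nat list \<Rightarrow> nat list \<Rightarrow> tab \<Rightarrow> (nat \<times> nat) set" where
  "down_path lamp lam T = step_path lamp lam T (down_m lamp lam T)"

definition exits_right :: "(nat \<times> nat) set \<Rightarrow> nat list \<Rightarrow> nat list \<Rightarrow> bool" where
  \<comment> \<open>the lowest cell of path B lies strictly below every cell of mu/mum\<close>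
  "exits_right B mu mum \<longleftrightarrow>
     (\<exists>c\<in>B. (\<forall>c'\<in>B. snd c \<le> snd c') \<and> (\<forall>d\<in>diagram mu - diagram mum. snd c < snd d))"

end

theory Submission
  imports Defs "HOL-Library.Multiset"
begin

text \<open>Let T = T_0, T_1, ... be the tableaux produced by the successive reverse row insertions at
  the cells of the horizontal strip, taken from right to left. As long as the values k_i leave
  through row 0, each reverse insertion is undone by an external insertion, so T is recovered by
  inserting k_{m'}, ..., k_1 into T_{m'}; since the cells lie in weakly increasing rows, these values
  weakly decrease. If no value lands in a row, D(T) is T itself. Otherwise the m-th value lands in
  some row r, which thereby gains a cell on the left, and D(T) inserts the earlier values into T_m.
  Insertion preserves semistandardness and never shortens rows, giving the lower bound on the outer
  shape. For the upper bound, compare with the same insertions into T_{m-1}, which rebuild T: the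
  value that landed acts as an extra entry at the front of row r, and an extra entry can only
  lengthen rows. The inner shape loses one cell in row r. The downward path starts at the vacated
  cell, so as it exits right, row r contains no cell of mu/mu^-, and mu/mu' is a vertical strip.\<close>

lemma rowof_setrow: "1 \<le> j \<Longrightarrow> rowof (setrow j row T) i = (if i = j then row else rowof T i)"
proof (cases "j \<le> length T")
  case True
  assume j: "1 \<le> j"
  show ?thesis using True j unfolding rowof_def setrow_def
    by (auto simp: nth_list_update)
next
  case False
  assume j: "1 \<le> j"
  show ?thesis
  proof (cases "1 \<le> i \<and> i \<le> length T")
    case True
    then have "i - 1 < length T" by linarith
    then show ?thesis using True False j unfolding rowof_def setrow_def by (simp add: nth_append)
  next
    case nI: False
    show ?thesis
    proof (cases "i = j")
      case True
      have "\<not> j - 1 < length T" using False by linarith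
      then show ?thesis using True False j unfolding rowof_def setrow_def
        by (simp add: nth_append)
    next
      case ne: False
      show ?thesis
      proof (cases "1 \<le> i \<and> i < j")
        case True
        then have "(T @ replicate (j - 1 - length T) (0, []) @ [row]) ! (i - 1) = (0, [])"
          using nI by (auto simp: nth_append)
        then show ?thesis using True nI False j ne unfolding rowof_def setrow_def by auto
      next
        case False
        then show ?thesis using nI ne \<open>\<not> j \<le> length T\<close> j unfolding rowof_def setrow_def by auto
      qed
    qed
  qed
qed

abbreviation row_start :: "tab \<Rightarrow> nat \<Rightarrow> nat" where "row_start S j \<equiv> fst (rowof S j)"

abbreviation row_entries :: "tab \<Rightarrow> nat \<Rightarrow> nat list" where "row_entries S j \<equiv> snd (rowof S j)"

abbreviation row_end :: "tab \<Rightarrow> nat \<Rightarrow> nat" where "row_end S j \<equiv> row_start S j + length (row_entries S j)"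

lemma rowof_beyond: "length S < j \<Longrightarrow> rowof S j = (0, [])" by (simp add: rowof_def)

lemma cellmap_eq: "cellmap S (i, j) = (if 1 \<le> j \<and> row_start S j < i \<and> i \<le> row_end S j then Some (row_entries S j ! (i - row_start S j - 1)) else None)"
  by (simp add: cellmap_def split: prod.splits)

lemma cellmap_rowof: "rowof S j = rowof S' j \<Longrightarrow> cellmap S (i, j) = cellmap S' (i, j)"
  by (simp add: cellmap_def)

text \<open>Two lists of rows describe the same tableau iff they agree up to trailing empty rows.\<close>

definition same_rows :: "tab \<Rightarrow> tab \<Rightarrow> bool" where
  "same_rows S S' \<longleftrightarrow> (\<forall>i. rowof S i = rowof S' i)"

lemma same_rows_refl[simp]: "same_rows S S" by (simp add: same_rows_def)

lemma same_rows_sym: "same_rows S S' \<Longrightarrow> same_rows S' S" by (simp add: same_rows_def)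

lemma same_rows_trans: "same_rows S S' \<Longrightarrow> same_rows S' S'' \<Longrightarrow> same_rows S S''" by (simp add: same_rows_def)

lemma same_rowsD: "same_rows S S' \<Longrightarrow> rowof S j = rowof S' j" by (simp add: same_rows_def)

lemma same_rows_setrow: "1 \<le> j \<Longrightarrow> same_rows S S' \<Longrightarrow> same_rows (setrow j row S) (setrow j row S')"
  by (simp add: same_rows_def rowof_setrow)

lemma same_rows_setrow_restore: "rowof S p = (b, R) \<Longrightarrow> 1 \<le> p \<Longrightarrow> same_rows (setrow p (b, R) (setrow p row' S)) S"
  by (simp add: same_rows_def rowof_setrow)

section \<open>Bumping values through a sorted row\<close>

definition bump_row :: "nat list \<Rightarrow> nat \<Rightarrow> nat list \<times> nat option" where
  "bump_row R x = (if (\<forall>y\<in>set R. y \<le> x) then (R @ [x], None)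
     else (let k = Min {k. k < length R \<and> x < R ! k} in (R[k := x], Some (R ! k))))"

lemma first_greater_index:
  assumes "\<not> (\<forall>y\<in>set (R::nat list). y \<le> x)"
  shows "Min {k. k < length R \<and> x < R ! k} < length R"
    "x < R ! Min {k. k < length R \<and> x < R ! k}"
    "\<forall>i < Min {k. k < length R \<and> x < R ! k}. R ! i \<le> x"
proof -
  let ?A = "{k. k < length R \<and> x < R ! k}"
  have fin: "finite ?A" by simp
  obtain y where "y \<in> set R" "\<not> y \<le> x" using assms by blast
  hence "y \<in> set R" "x < y" by (auto simp: not_le)
  then obtain i0 where "i0 < length R" "R ! i0 = y" by (auto simp: in_set_conv_nth)
  hence ne: "?A \<noteq> {}" using \<open>x < y\<close> by auto
  have "Min ?A \<in> ?A" using Min_in[OF fin ne] .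
  then show "Min ?A < length R" "x < R ! Min ?A" by auto
  show "\<forall>i < Min ?A. R ! i \<le> x"
  proof (intro allI impI)
    fix i assume i: "i < Min ?A"
    hence "i < length R" using \<open>Min ?A \<in> ?A\<close> by auto
    show "R ! i \<le> x"
    proof (rule ccontr)
      assume "\<not> R ! i \<le> x"
      hence "i \<in> ?A" using \<open>i < length R\<close> by auto
      hence "Min ?A \<le> i" using fin by simp
      thus False using i by simp
    qed
  qed
qed

lemma bump_row_append: "(\<forall>y\<in>set R. y \<le> x) \<Longrightarrow> bump_row R x = (R @ [x], None)"
  by (simp add: bump_row_def)

definition least_greater :: "nat list \<Rightarrow> nat \<Rightarrow> nat \<Rightarrow> bool" where
  "least_greater R x m \<longleftrightarrow> m \<in> set R \<and> x < m \<and> (\<forall>y\<in>set R. x < y \<longrightarrow> m \<le> y)"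

lemma bump_row_replace_index:
  assumes "\<not> (\<forall>y\<in>set R. y \<le> (x::nat))"
  shows "\<exists>k. bump_row R x = (R[k := x], Some (R ! k)) \<and> k < length R \<and> x < R ! k \<and> (\<forall>i<k. R ! i \<le> x)"
  using first_greater_index[OF assms] assms by (auto simp: bump_row_def Let_def)

lemma sorted_update_first_greater:
  assumes "sorted R" "k < length R" "(x::nat) < R ! k" "\<forall>i<k. R ! i \<le> x"
  shows "sorted (R[k := x])"
  unfolding sorted_iff_nth_mono
proof (intro allI impI)
  fix i j assume ij: "i \<le> j" "j < length (R[k := x])"
  have s: "\<And>a b. a \<le> b \<Longrightarrow> b < length R \<Longrightarrow> R ! a \<le> R ! b"
    using assms(1) by (simp add: sorted_iff_nth_mono)
  show "R[k := x] ! i \<le> R[k := x] ! j"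
    using ij assms s[of k j] s[of i j] by (auto simp: nth_list_update)
qed

lemma bump_row_replace:
  assumes "sorted R" "\<not> (\<forall>y\<in>set R. y \<le> (x::nat))"
  shows "\<exists>R' m. bump_row R x = (R', Some m) \<and> least_greater R x m \<and>
            mset R' = add_mset x (mset R - {#m#}) \<and> sorted R' \<and> length R' = length R"
proof -
  obtain k where k: "bump_row R x = (R[k := x], Some (R ! k))" "k < length R" "x < R ! k" "\<forall>i<k. R ! i \<le> x"
    using bump_row_replace_index[OF assms(2)] by blast
  have "least_greater R x (R ! k)"
    unfolding least_greater_def
  proof (intro conjI ballI impI)
    show "R ! k \<in> set R" using k by simp
    show "x < R ! k" using k by simp
    fix y assume "y \<in> set R" "x < y"
    then obtain i where i: "i < length R" "R ! i = y" by (auto simp: in_set_conv_nth)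
    have "\<not> i < k" using k(4) i \<open>x < y\<close> by force
    thus "R ! k \<le> y" using assms(1) i by (metis not_less sorted_iff_nth_mono)
  qed
  moreover have "mset (R[k := x]) = add_mset x (mset R - {#R ! k#})" using k by (simp add: mset_update)
  moreover have "sorted (R[k := x])" using sorted_update_first_greater[OF assms(1) k(2-4)] .
  ultimately show ?thesis using k by auto
qed

lemma sorted_bump_row: "sorted R \<Longrightarrow> sorted (fst (bump_row R x))"
proof (cases "\<forall>y\<in>set R. y \<le> x")
  case True
  assume "sorted R"
  then show ?thesis using True by (simp add: bump_row_append sorted_append)
next
  case False
  assume "sorted R"
  then show ?thesis using bump_row_replace[OF _ False] by auto
qed

lemma in_bump_row: "x \<in> set (fst (bump_row R x))"
proof (cases "\<forall>y\<in>set R. y \<le> x")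
  case True then show ?thesis by (simp add: bump_row_append)
next
  case False
  obtain k where "bump_row R x = (R[k := x], Some (R ! k))" "k < length R"
    using bump_row_replace_index[OF False] by blast
  then show ?thesis by (simp add: set_update_memI)
qed

lemma length_bump_row: "length (fst (bump_row R x)) = length R + (if \<forall>y\<in>set R. y \<le> x then 1 else 0)"
  by (auto simp: bump_row_def Let_def)

lemma length_bump_row_ge: "length r \<le> length (fst (bump_row r x))"
  by (simp add: bump_row_def Let_def)

lemma bump_row_Cons_0: "bump_row (0 # R) v = (0 # fst (bump_row R v), snd (bump_row R v))"
proof (cases "\<forall>y\<in>set R. y \<le> v")
  case True then show ?thesis by (simp add: bump_row_append)
next
  case False
  obtain k where k: "bump_row R v = (R[k := v], Some (R ! k))" "k < length R" "v < R ! k" "\<forall>i<k. R ! i \<le> v"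
    using bump_row_replace_index[OF False] by blast
  have F0: "\<not> (\<forall>y\<in>set (0 # R). y \<le> v)" using False by simp
  have m: "Min {i. i < length (0 # R) \<and> v < (0 # R) ! i} = Suc k"
  proof (rule Min_eqI)
    show "finite {i. i < length (0 # R) \<and> v < (0 # R) ! i}" by simp
    show "Suc k \<in> {i. i < length (0 # R) \<and> v < (0 # R) ! i}" using k by simp
    fix i assume "i \<in> {i. i < length (0 # R) \<and> v < (0 # R) ! i}"
    hence i: "i < Suc (length R)" "v < (0 # R) ! i" by auto
    show "Suc k \<le> i"
    proof (cases i)
      case 0 then show ?thesis using i by simp
    next
      case (Suc i')
      have "v < R ! i'" using i Suc by simp
      hence "\<not> i' < k" using k(4) by force
      then show ?thesis using Suc by simp
    qed
  qed
  show ?thesis using k(1) F0 m by (simp add: bump_row_def Let_def)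
qed

definition option_list :: "'a option \<Rightarrow> 'a list" where
  "option_list v = (case v of None \<Rightarrow> [] | Some y \<Rightarrow> [y])"

lemma option_list_simps[simp]: "option_list None = []" "option_list (Some y) = [y]" by (simp_all add: option_list_def)

text \<open>Row insertion of the values V one after another into the row R: the resulting row and the
  values bumped out of it, in the order in which they are inserted into the next row.\<close>

fun bump_row_list :: "nat list \<Rightarrow> nat list \<Rightarrow> nat list \<times> nat list" where
  "bump_row_list R [] = (R, [])"
| "bump_row_list R (v # vs) = (case bump_row R v of (R', ov) \<Rightarrow> (case bump_row_list R' vs of (R'', Os) \<Rightarrow> (R'', option_list ov @ Os)))"

lemma bump_row_list_append: "bump_row_list R (V @ W) = (case bump_row_list R V of (R1, O1) \<Rightarrow> (case bump_row_list R1 W of (R2, O2) \<Rightarrow> (R2, O1 @ O2)))"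
  by (induction V arbitrary: R) (auto split: prod.splits)

lemma fst_bump_row_list_append:
  "fst (bump_row_list (fst (bump_row_list R V)) W) = fst (bump_row_list R (V @ W))"
  by (simp add: bump_row_list_append split: prod.splits)

lemma bump_row_list_snoc:
  "bump_row_list R (V @ [x]) = (fst (bump_row (fst (bump_row_list R V)) x),
     snd (bump_row_list R V) @ option_list (snd (bump_row (fst (bump_row_list R V)) x)))"
  by (simp add: bump_row_list_append split: prod.splits)

lemma sorted_bump_row_list: "sorted R \<Longrightarrow> sorted (fst (bump_row_list R V))"
proof (induction V arbitrary: R)
  case Nil then show ?case by simp
next
  case (Cons v V)
  obtain R' ov where e: "bump_row R v = (R', ov)" by fastforce
  have "sorted R'" using sorted_bump_row[OF Cons.prems, of v] e by simp
  then show ?case using Cons.IH[of R'] e by (auto split: prod.splits)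
qed

lemma sorted_bumped_out_gen:
  assumes "sorted R" "sorted V" "\<forall>v\<in>set V. a \<le> v" "\<forall>w\<in>set O0. \<forall>y\<in>set R. a < y \<longrightarrow> w \<le> y" "sorted O0"
  shows "sorted (O0 @ snd (bump_row_list R V))"
  using assms
proof (induction V arbitrary: R a O0)
  case Nil then show ?case by simp
next
  case (Cons v V)
  show ?case
  proof (cases "\<forall>y\<in>set R. y \<le> v")
    case True
    have e: "bump_row R v = (R @ [v], None)" using bump_row_append[OF True] .
    have "sorted (O0 @ snd (bump_row_list (R @ [v]) V))"
    proof (rule Cons.IH)
      show "sorted (R @ [v])" using Cons.prems(1) True by (simp add: sorted_append)
      show "sorted V" using Cons.prems(2) by simp
      show "\<forall>x\<in>set V. v \<le> x" using Cons.prems(2) by simp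
      show "\<forall>w\<in>set O0. \<forall>y\<in>set (R @ [v]). v < y \<longrightarrow> w \<le> y" using True by auto
      show "sorted O0" by fact
    qed
    then show ?thesis using e by (auto split: prod.splits)
  next
    case False
    obtain k where k: "bump_row R v = (R[k := v], Some (R ! k))" "k < length R" "v < R ! k" "\<forall>i<k. R ! i \<le> v"
      using bump_row_replace_index[OF False] by blast
    have av: "a \<le> v" using Cons.prems(3) by simp
    have "sorted ((O0 @ [R ! k]) @ snd (bump_row_list (R[k := v]) V))"
    proof (rule Cons.IH)
      show "sorted (R[k := v])" using sorted_update_first_greater[OF Cons.prems(1) k(2-4)] .
      show "sorted V" using Cons.prems(2) by simp
      show "\<forall>x\<in>set V. v \<le> x" using Cons.prems(2) by simp
      show "\<forall>w\<in>set (O0 @ [R ! k]). \<forall>y\<in>set (R[k := v]). v < y \<longrightarrow> w \<le> y"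
      proof (intro ballI impI)
        fix w y assume w: "w \<in> set (O0 @ [R ! k])" and y: "y \<in> set (R[k := v])" and vy: "v < y"
        obtain i where i: "i < length R" "R[k := v] ! i = y" using y by (auto simp: in_set_conv_nth)
        have ik: "i \<noteq> k" using i vy k(2) by auto
        hence yi: "y = R ! i" using i by simp
        have "\<not> i < k" using k(4) yi vy by force
        hence "k < i" using ik by simp
        hence "R ! k \<le> y" using Cons.prems(1) i yi by (simp add: sorted_iff_nth_mono)
        moreover have "y \<in> set R" using yi i by simp
        ultimately show "w \<le> y" using w Cons.prems(4) av vy by auto
      qed
      show "sorted (O0 @ [R ! k])" using Cons.prems(4,5) av k(2,3) by (auto simp: sorted_append)
    qed
    then show ?thesis using k by (auto split: prod.splits)
  qed
qed

lemma sorted_bumped_out: "sorted R \<Longrightarrow> sorted V \<Longrightarrow> sorted (snd (bump_row_list R V))"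
  using sorted_bumped_out_gen[of R V 0 "[]"] by simp

lemma bump_row_list_Cons_0: "bump_row_list (0 # R) V = (0 # fst (bump_row_list R V), snd (bump_row_list R V))"
proof (induction V arbitrary: R)
  case Nil then show ?case by simp
next
  case (Cons v V)
  show ?case using bump_row_Cons_0[of R v] Cons[of "fst (bump_row R v)"] by (simp split: prod.splits)
qed

lemma bump_row_list_zero:
  assumes "sorted (e # R0)" "0 < e"
  shows "bump_row_list (e # R0) (0 # V) = (0 # fst (bump_row_list R0 V), e # snd (bump_row_list R0 V))"
proof -
  have F: "\<not> (\<forall>y\<in>set (e # R0). y \<le> 0)" using assms(2) by simp
  have m: "Min {k. k < length (e # R0) \<and> 0 < (e # R0) ! k} = 0"
    by (rule Min_eqI) (use assms(2) in auto)
  have "bump_row (e # R0) 0 = (0 # R0, Some e)" using F m by (simp add: bump_row_def Let_def)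
  then show ?thesis using bump_row_list_Cons_0[of R0 V] by (simp split: prod.splits)
qed

section \<open>Bumping one extra value through a row\<close>

text \<open>Compare inserting V and z # V into the same row, where z is at most every value of V.
  At each stage either the second row holds z in addition and both have bumped out the same values,
  or in the second row z has taken the place of some q > z, which was bumped out in addition.\<close>

definition extra_value_inv :: "nat \<Rightarrow> nat list \<Rightarrow> nat list \<Rightarrow> nat list \<Rightarrow> nat list \<Rightarrow> bool" where
  "extra_value_inv z R1 O1 R2 O2 \<longleftrightarrow> sorted R1 \<and> sorted R2 \<and>
     ((mset R2 = add_mset z (mset R1) \<and> mset O2 = mset O1) \<or>
      (\<exists>q. z < q \<and> add_mset q (mset R2) = add_mset z (mset R1) \<and> mset O2 = add_mset q (mset O1)))"

lemma add_mset_diff_mem: "m \<in># M \<Longrightarrow> add_mset q (M - {#m#}) = add_mset q M - {#m#}"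
  by (simp add: multiset_eq_iff)

lemma add_mset_swap_diff: "m \<in># M \<Longrightarrow> add_mset q (add_mset x (M - {#m#})) = add_mset x (add_mset q M - {#m#})"
  by (auto simp: multiset_eq_iff)

lemma add_mset_diff_cancel: "m \<in># M \<Longrightarrow> add_mset m (add_mset x (M - {#m#})) = add_mset x M"
  by (auto simp: multiset_eq_iff)

lemma extra_value_invI_aligned:
  "sorted R1 \<Longrightarrow> sorted R2 \<Longrightarrow> mset R2 = add_mset z (mset R1) \<Longrightarrow> mset O2 = mset O1 \<Longrightarrow>
    extra_value_inv z R1 O1 R2 O2"
  unfolding extra_value_inv_def by blast

lemma extra_value_invI_shifted:
  "sorted R1 \<Longrightarrow> sorted R2 \<Longrightarrow> z < q \<Longrightarrow> add_mset q (mset R2) = add_mset z (mset R1) \<Longrightarrow>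
    mset O2 = add_mset q (mset O1) \<Longrightarrow> extra_value_inv z R1 O1 R2 O2"
  unfolding extra_value_inv_def by blast

lemma extra_value_inv_step_aligned:
  assumes s1: "sorted R1" and s2: "sorted R2" and A1: "mset R2 = add_mset z (mset R1)" and A2: "mset O2 = mset O1"
    and zx: "z \<le> x"
  shows "extra_value_inv z (fst (bump_row R1 x)) (O1 @ option_list (snd (bump_row R1 x))) (fst (bump_row R2 x)) (O2 @ option_list (snd (bump_row R2 x)))"
proof -
  have sorted_rows: "sorted (fst (bump_row R1 x))" "sorted (fst (bump_row R2 x))" using sorted_bump_row s1 s2 by auto
  have "set_mset (mset R2) = insert z (set_mset (mset R1))" using A1 by simp
  hence set2: "set R2 = insert z (set R1)" by simp
  show ?thesis
  proof (cases "\<forall>y\<in>set R1. y \<le> x")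
    case True
    hence T2: "\<forall>y\<in>set R2. y \<le> x" using set2 zx by auto
    have "mset (R2 @ [x]) = add_mset z (mset (R1 @ [x]))" using A1 by simp
    then show ?thesis using bump_row_append[OF True] bump_row_append[OF T2] A2 sorted_rows unfolding extra_value_inv_def by simp
  next
    case False
    hence F2: "\<not>(\<forall>y\<in>set R2. y \<le> x)" using set2 by auto
    obtain R1' m1 where r1: "bump_row R1 x = (R1', Some m1)" "least_greater R1 x m1" "mset R1' = add_mset x (mset R1 - {#m1#})"
      using bump_row_replace[OF s1 False] by blast
    obtain R2' m2 where r2: "bump_row R2 x = (R2', Some m2)" "least_greater R2 x m2" "mset R2' = add_mset x (mset R2 - {#m2#})"
      using bump_row_replace[OF s2 F2] by blast
    have "m2 \<le> m1" using r1(2) r2(2) set2 unfolding least_greater_def by auto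
    moreover have "m1 \<le> m2" using r1(2) r2(2) set2 zx unfolding least_greater_def by auto
    ultimately have m: "m1 = m2" by simp
    have m1R: "m1 \<in># mset R1" using r1(2) by (simp add: least_greater_def)
    have "mset R2' = add_mset x (add_mset z (mset R1) - {#m1#})" using r2(3) A1 m by simp
    also have "\<dots> = add_mset z (mset R1')" using r1(3) m1R
      by (simp add: add_mset_diff_mem[symmetric] add_mset_commute)
    finally have e: "mset R2' = add_mset z (mset R1')" .
    have "mset (O2 @ [m2]) = mset (O1 @ [m1])" using A2 m by simp
    then show ?thesis using r1(1) r2(1) sorted_rows e unfolding extra_value_inv_def by simp
  qed
qed

lemma all_le_iff_if_agree_above:
  "(\<And>y. x < y \<Longrightarrow> y \<in> set R2 \<longleftrightarrow> y \<in> set R1) \<Longrightarrow> (\<forall>y\<in>set R1. y \<le> (x::nat)) \<longleftrightarrow> (\<forall>y\<in>set R2. y \<le> x)"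
  by (meson not_le)

lemma add_mset_exchange:
  assumes e: "add_mset q (mset R2) = add_mset z (mset R1)" and qz: "q \<noteq> z"
  shows "q \<in> set R1" "mset R2 = add_mset z (mset R1 - {#q#})"
    "\<And>y. y \<noteq> z \<Longrightarrow> y \<noteq> q \<Longrightarrow> y \<in> set R2 \<longleftrightarrow> y \<in> set R1"
    "\<And>y. y \<in> set R2 \<Longrightarrow> y \<noteq> z \<Longrightarrow> y \<in> set R1"
proof -
  have "q \<in># add_mset z (mset R1)" using e[symmetric] by simp
  then show q: "q \<in> set R1" using qz by simp
  have "mset R2 = add_mset z (mset R1) - {#q#}" using e by (metis add_mset_remove_trivial)
  then show "mset R2 = add_mset z (mset R1 - {#q#})" using qz by simp
  have "y \<in># add_mset q (mset R2) \<longleftrightarrow> y \<in># add_mset z (mset R1)" for y using e by simp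
  then show "\<And>y. y \<noteq> z \<Longrightarrow> y \<noteq> q \<Longrightarrow> y \<in> set R2 \<longleftrightarrow> y \<in> set R1"
    and "\<And>y. y \<in> set R2 \<Longrightarrow> y \<noteq> z \<Longrightarrow> y \<in> set R1"
    using q by auto
qed

lemma extra_value_inv_step_shifted_le:
  assumes s1: "sorted R1" and s2: "sorted R2" and B1: "z < q" and B2: "add_mset q (mset R2) = add_mset z (mset R1)"
    and B3: "mset O2 = add_mset q (mset O1)" and zx: "z \<le> x" and qx: "q \<le> x"
  shows "extra_value_inv z (fst (bump_row R1 x)) (O1 @ option_list (snd (bump_row R1 x))) (fst (bump_row R2 x)) (O2 @ option_list (snd (bump_row R2 x)))"
proof -
  have qz: "q \<noteq> z" using B1 by simp
  note agree = add_mset_exchange(3)[OF B2 qz]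
  have eqs: "\<And>y. x < y \<Longrightarrow> y \<in> set R2 \<longleftrightarrow> y \<in> set R1"
  proof -
    fix y assume "x < y" thus "y \<in> set R2 \<longleftrightarrow> y \<in> set R1" using agree[of y] zx qx by simp
  qed
  note le_eq = all_le_iff_if_agree_above[of x R2 R1, OF eqs]
  show ?thesis
  proof (cases "\<forall>y\<in>set R1. y \<le> x")
    case True
    hence T2: "\<forall>y\<in>set R2. y \<le> x" using le_eq by simp
    have e: "add_mset q (mset (R2 @ [x])) = add_mset z (mset (R1 @ [x]))"
      using B2 by (simp add: add_mset_commute)
    have "extra_value_inv z (R1 @ [x]) (O1 @ []) (R2 @ [x]) (O2 @ [])"
      by (rule extra_value_invI_shifted) (use s1 s2 True T2 B1 e B3 in \<open>simp_all add: sorted_append\<close>)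
    then show ?thesis using bump_row_append[OF True] bump_row_append[OF T2] by simp
  next
    case False
    hence F2: "\<not>(\<forall>y\<in>set R2. y \<le> x)" using le_eq by simp
    obtain R1' m1 where r1: "bump_row R1 x = (R1', Some m1)" "least_greater R1 x m1" "mset R1' = add_mset x (mset R1 - {#m1#})" "sorted R1'"
      using bump_row_replace[OF s1 False] by blast
    obtain R2' m2 where r2: "bump_row R2 x = (R2', Some m2)" "least_greater R2 x m2" "mset R2' = add_mset x (mset R2 - {#m2#})" "sorted R2'"
      using bump_row_replace[OF s2 F2] by blast
    have m1R: "m1 \<in> set R1" "x < m1" using r1(2) by (simp_all add: least_greater_def)
    have m2R: "m2 \<in> set R2" "x < m2" using r2(2) by (simp_all add: least_greater_def)
    have "m2 \<le> m1" using r2(2) m1R eqs[of m1] unfolding least_greater_def by blast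
    moreover have "m1 \<le> m2" using r1(2) m2R eqs[of m2] unfolding least_greater_def by blast
    ultimately have m: "m1 = m2" by simp
    have "add_mset q (mset R2') = add_mset x (add_mset q (mset R2) - {#m2#})"
      unfolding r2(3) by (rule add_mset_swap_diff) (use m2R in simp)
    also have "\<dots> = add_mset x (add_mset z (mset R1) - {#m1#})" using B2 m by simp
    also have "\<dots> = add_mset z (mset R1')" unfolding r1(3) by (rule add_mset_swap_diff[symmetric]) (use m1R in simp)
    finally have e: "add_mset q (mset R2') = add_mset z (mset R1')" .
    have o: "mset (O2 @ [m2]) = add_mset q (mset (O1 @ [m1]))" using B3 m by (simp add: add_mset_commute)
    have "extra_value_inv z R1' (O1 @ [m1]) R2' (O2 @ [m2])" by (rule extra_value_invI_shifted[OF r1(4) r2(4) B1 e o])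
    then show ?thesis using r1(1) r2(1) by simp
  qed
qed

lemma extra_value_inv_step_shifted_gt:
  assumes s1: "sorted R1" and s2: "sorted R2" and B1: "z < q" and B2: "add_mset q (mset R2) = add_mset z (mset R1)"
    and B3: "mset O2 = add_mset q (mset O1)" and zx: "z \<le> x" and qx: "x < q"
  shows "extra_value_inv z (fst (bump_row R1 x)) (O1 @ option_list (snd (bump_row R1 x))) (fst (bump_row R2 x)) (O2 @ option_list (snd (bump_row R2 x)))"
proof -
  have qz: "q \<noteq> z" using B1 by simp
  note R2m = add_mset_exchange(2)[OF B2 qz] and agree = add_mset_exchange(3)[OF B2 qz]
    and sub = add_mset_exchange(4)[OF B2 qz]
  have F1: "\<not>(\<forall>y\<in>set R1. y \<le> x)" using add_mset_exchange(1)[OF B2 qz] qx leD by blast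
  obtain R1' m1 where r1: "bump_row R1 x = (R1', Some m1)" "least_greater R1 x m1" "mset R1' = add_mset x (mset R1 - {#m1#})" "sorted R1'"
    using bump_row_replace[OF s1 F1] by blast
  have m1R: "m1 \<in> set R1" "x < m1" using r1(2) by (simp_all add: least_greater_def)
  have m1z: "m1 \<noteq> z" using m1R zx by simp
  show ?thesis
  proof (cases "\<forall>y\<in>set R2. y \<le> x")
    case True
    have m1q: "m1 = q"
    proof (rule ccontr)
      assume "m1 \<noteq> q"
      hence "m1 \<in> set R2" using agree[of m1] m1R m1z by simp
      thus False using True m1R by auto
    qed
    have e: "mset (R2 @ [x]) = add_mset z (mset R1')" using R2m r1(3) m1q by (simp add: add_mset_commute)
    have o: "mset (O2 @ []) = mset (O1 @ [m1])" using B3 m1q by simp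
    have "extra_value_inv z R1' (O1 @ [m1]) (R2 @ [x]) (O2 @ [])"
      by (rule extra_value_invI_aligned[OF r1(4) _ e o]) (use s2 True in \<open>simp add: sorted_append\<close>)
    then show ?thesis using r1(1) bump_row_append[OF True] by simp
  next
    case F2: False
    obtain R2' m2 where r2: "bump_row R2 x = (R2', Some m2)" "least_greater R2 x m2" "mset R2' = add_mset x (mset R2 - {#m2#})" "sorted R2'"
      using bump_row_replace[OF s2 F2] by blast
    have m2R: "m2 \<in> set R2" "x < m2" using r2(2) by (simp_all add: least_greater_def)
    have m2z: "m2 \<noteq> z" using m2R zx by simp
    have "m2 \<in> set R1" using sub m2R m2z by simp
    hence m12: "m1 \<le> m2" using r1(2) m2R unfolding least_greater_def by blast
    show ?thesis
    proof (cases "m1 = m2")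
      case m: True
      have "add_mset q (mset R2') = add_mset x (add_mset q (mset R2) - {#m2#})"
        unfolding r2(3) by (rule add_mset_swap_diff) (use m2R in simp)
      also have "\<dots> = add_mset x (add_mset z (mset R1) - {#m1#})" using B2 m by simp
      also have "\<dots> = add_mset z (mset R1')" unfolding r1(3) by (rule add_mset_swap_diff[symmetric]) (use m1R in simp)
      finally have e: "add_mset q (mset R2') = add_mset z (mset R1')" .
      have o: "mset (O2 @ [m2]) = add_mset q (mset (O1 @ [m1]))" using B3 m by (simp add: add_mset_commute)
      have "extra_value_inv z R1' (O1 @ [m1]) R2' (O2 @ [m2])" by (rule extra_value_invI_shifted[OF r1(4) r2(4) B1 e o])
      then show ?thesis using r1(1) r2(1) by simp
    next
      case ne: False
      have "m1 \<notin> set R2"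
      proof
        assume "m1 \<in> set R2"
        hence "m2 \<le> m1" using r2(2) m1R unfolding least_greater_def by blast
        thus False using m12 ne by simp
      qed
      hence m1q: "m1 = q" using agree[of m1] m1R m1z by auto
      have "add_mset m2 (mset R2') = add_mset x (mset R2)"
        unfolding r2(3) by (rule add_mset_diff_cancel) (use m2R in simp)
      also have "\<dots> = add_mset z (mset R1')" unfolding R2m r1(3) m1q by (rule add_mset_commute)
      finally have e: "add_mset m2 (mset R2') = add_mset z (mset R1')" .
      have zm2: "z < m2" using m2R zx by simp
      have o: "mset (O2 @ [m2]) = add_mset m2 (mset (O1 @ [m1]))" using B3 m1q by (simp add: add_mset_commute)
      have "extra_value_inv z R1' (O1 @ [m1]) R2' (O2 @ [m2])" by (rule extra_value_invI_shifted[OF r1(4) r2(4) zm2 e o])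
      then show ?thesis using r1(1) r2(1) by simp
    qed
  qed
qed

lemma extra_value_inv_step:
  assumes inv: "extra_value_inv z R1 O1 R2 O2" and zx: "z \<le> x"
  shows "extra_value_inv z (fst (bump_row R1 x)) (O1 @ option_list (snd (bump_row R1 x))) (fst (bump_row R2 x)) (O2 @ option_list (snd (bump_row R2 x)))"
proof -
  have s1: "sorted R1" and s2: "sorted R2" using inv by (auto simp: extra_value_inv_def)
  from inv consider (A) "mset R2 = add_mset z (mset R1)" "mset O2 = mset O1"
    | (B) q where "z < q" "add_mset q (mset R2) = add_mset z (mset R1)" "mset O2 = add_mset q (mset O1)"
    unfolding extra_value_inv_def by blast
  then show ?thesis
  proof cases
    case A then show ?thesis using extra_value_inv_step_aligned[OF s1 s2 _ _ zx] by blast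
  next
    case B
    then show ?thesis
      using extra_value_inv_step_shifted_le[OF s1 s2 _ _ _ zx] extra_value_inv_step_shifted_gt[OF s1 s2 _ _ _ zx]
      by (cases "q \<le> x") auto
  qed
qed

lemma extra_value_inv_init:
  assumes "sorted R"
  shows "extra_value_inv z R [] (fst (bump_row R z)) (option_list (snd (bump_row R z)))"
proof (cases "\<forall>y\<in>set R. y \<le> z")
  case True
  then show ?thesis using assms bump_row_append[OF True] by (simp add: extra_value_inv_def sorted_append)
next
  case False
  obtain R' m where r: "bump_row R z = (R', Some m)" "least_greater R z m" "mset R' = add_mset z (mset R - {#m#})" "sorted R'"
    using bump_row_replace[OF assms False] by blast
  have mR: "m \<in># mset R" using r(2) by (simp add: least_greater_def)
  have "add_mset m (mset R') = add_mset z (mset R)" unfolding r(3) by (rule add_mset_diff_cancel[OF mR])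
  then show ?thesis using r assms unfolding extra_value_inv_def least_greater_def by auto
qed

lemma extra_value_inv_run:
  assumes "sorted R" "\<forall>s\<in>set S. z \<le> s"
  shows "extra_value_inv z (fst (bump_row_list R S)) (snd (bump_row_list R S)) (fst (bump_row_list R (z # S))) (snd (bump_row_list R (z # S)))"
  using assms(2)
proof (induction S rule: rev_induct)
  case Nil
  show ?case using extra_value_inv_init[OF assms(1), of z] by (auto split: prod.splits)
next
  case (snoc x S)
  have IH: "extra_value_inv z (fst (bump_row_list R S)) (snd (bump_row_list R S)) (fst (bump_row_list R (z # S))) (snd (bump_row_list R (z # S)))"
    using snoc by simp
  have zx: "z \<le> x" using snoc.prems by simp
  show ?case using extra_value_inv_step[OF IH zx] bump_row_list_snoc[of R "z # S" x] by (simp add: bump_row_list_snoc)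
qed

lemma bump_row_list_extra_value:
  assumes "sorted R" "\<forall>s\<in>set S. z \<le> s"
  shows "(mset (snd (bump_row_list R (P @ z # S))) = mset (snd (bump_row_list R (P @ S))) \<and>
            length (fst (bump_row_list R (P @ z # S))) = Suc (length (fst (bump_row_list R (P @ S))))) \<or>
         (\<exists>q. mset (snd (bump_row_list R (P @ z # S))) = add_mset q (mset (snd (bump_row_list R (P @ S)))) \<and>
            length (fst (bump_row_list R (P @ z # S))) = length (fst (bump_row_list R (P @ S))))"
proof -
  obtain R1 O1 where p: "bump_row_list R P = (R1, O1)" by fastforce
  have sR1: "sorted R1" using sorted_bump_row_list[OF assms(1), of P] p by simp
  have inv: "extra_value_inv z (fst (bump_row_list R1 S)) (snd (bump_row_list R1 S)) (fst (bump_row_list R1 (z # S))) (snd (bump_row_list R1 (z # S)))"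
    using extra_value_inv_run[OF sR1 assms(2)] .
  have e1: "bump_row_list R (P @ S) = (fst (bump_row_list R1 S), O1 @ snd (bump_row_list R1 S))" using p by (simp add: bump_row_list_append split: prod.splits)
  have e2: "bump_row_list R (P @ z # S) = (fst (bump_row_list R1 (z # S)), O1 @ snd (bump_row_list R1 (z # S)))" using p by (simp add: bump_row_list_append split: prod.splits)
  show ?thesis using inv unfolding e1 e2 extra_value_inv_def
    by (auto dest: arg_cong[where f=size])
qed

lemma insort_split: "\<exists>P S. xs = P @ S \<and> insort q xs = P @ q # S \<and> (sorted xs \<longrightarrow> (\<forall>s\<in>set S. q \<le> s))"
proof (induction xs)
  case Nil then show ?case by auto
next
  case (Cons a xs)
  show ?case
  proof (cases "q \<le> a")
    case True
    then show ?thesis by (rule_tac x="[]" in exI, rule_tac x="a # xs" in exI) auto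
  next
    case False
    then obtain P S where "xs = P @ S" "insort q xs = P @ q # S" "sorted xs \<longrightarrow> (\<forall>s\<in>set S. q \<le> s)"
      using Cons by blast
    then show ?thesis using False by (rule_tac x="a # P" in exI, rule_tac x=S in exI) auto
  qed
qed

lemma sorted_add_mset_split:
  assumes "sorted O1" "sorted O2" "mset O2 = add_mset q (mset O1)"
  shows "\<exists>P S. O1 = P @ S \<and> O2 = P @ q # S \<and> (\<forall>s\<in>set S. q \<le> s)"
proof -
  have "sort (q # O1) = O2" by (rule properties_for_sort) (use assms(2,3) in simp_all)
  hence "O2 = insort q O1" using assms(1) by (simp add: sorted_sort_id)
  then show ?thesis using insort_split[of O1 q] assms(1) by auto
qed

lemma sorted_eq_if_mset_eq: "sorted A \<Longrightarrow> sorted B \<Longrightarrow> mset A = mset B \<Longrightarrow> A = B"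
  by (metis properties_for_sort)

definition one_more :: "nat list \<Rightarrow> nat list \<Rightarrow> bool" where
  "one_more A C \<longleftrightarrow> sorted A \<and> sorted C \<and> (C = A \<or> (\<exists>Pp S z. A = Pp @ S \<and> C = Pp @ z # S \<and> (\<forall>s\<in>set S. z \<le> s)))"

lemma one_more_bump_row_list:
  assumes "one_more A C" "sorted R"
  shows "one_more (snd (bump_row_list R A)) (snd (bump_row_list R C)) \<and> length (fst (bump_row_list R A)) \<le> length (fst (bump_row_list R C))"
proof -
  have sA: "sorted A" and sC: "sorted C" using assms(1) by (auto simp: one_more_def)
  have sOA: "sorted (snd (bump_row_list R A))" and sOC: "sorted (snd (bump_row_list R C))" using sorted_bumped_out assms(2) sA sC by auto
  from assms(1) consider "C = A" | Pp S z where "A = Pp @ S" "C = Pp @ z # S" "\<forall>s\<in>set S. z \<le> s"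
    unfolding one_more_def by blast
  then show ?thesis
  proof cases
    case 1 then show ?thesis using sOA by (simp add: one_more_def)
  next
    case 2
    note M = bump_row_list_extra_value[OF assms(2) 2(3), of Pp]
    then show ?thesis
    proof
      assume h: "mset (snd (bump_row_list R (Pp @ z # S))) = mset (snd (bump_row_list R (Pp @ S))) \<and>
            length (fst (bump_row_list R (Pp @ z # S))) = Suc (length (fst (bump_row_list R (Pp @ S))))"
      have "snd (bump_row_list R C) = snd (bump_row_list R A)" using sorted_eq_if_mset_eq[OF sOC sOA] h 2 by simp
      then show ?thesis using h 2 sOA unfolding one_more_def by simp
    next
      assume "\<exists>q. mset (snd (bump_row_list R (Pp @ z # S))) = add_mset q (mset (snd (bump_row_list R (Pp @ S)))) \<and>
            length (fst (bump_row_list R (Pp @ z # S))) = length (fst (bump_row_list R (Pp @ S)))"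
      then obtain q where h: "mset (snd (bump_row_list R C)) = add_mset q (mset (snd (bump_row_list R A)))"
          "length (fst (bump_row_list R C)) = length (fst (bump_row_list R A))" using 2 by auto
      obtain P2 S2 where "snd (bump_row_list R A) = P2 @ S2" "snd (bump_row_list R C) = P2 @ q # S2" "\<forall>s\<in>set S2. q \<le> s"
        using sorted_add_mset_split[OF sOA sOC h(1)] by blast
      hence "one_more (snd (bump_row_list R A)) (snd (bump_row_list R C))" using sOA sOC unfolding one_more_def by blast
      then show ?thesis using h(2) by simp
    qed
  qed
qed

section \<open>Row insertion into a tableau\<close>

lemma ins_0[simp]: "ins x 0 T = T" by (subst ins.simps) simp

lemma same_rows_ins: "same_rows S S' \<Longrightarrow> same_rows (ins x j S) (ins x j S')"
proof (induction x j S arbitrary: S' rule: ins.induct)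
  case (1 x j T)
  show ?case
  proof (cases "j = 0")
    case True then show ?thesis using 1 by simp
  next
    case False
    have rj: "rowof T j = rowof S' j" using "1.prems" by (simp add: same_rows_def)
    obtain b r where br: "rowof T j = (b, r)" by fastforce
    show ?thesis
    proof (cases "\<forall>y\<in>set r. y \<le> x")
      case True
      moreover have "ins x j T = setrow j (b, r @ [x]) T"
        using False br True by (subst ins.simps) simp
      moreover have "ins x j S' = setrow j (b, r @ [x]) S'"
        using False br rj True by (subst ins.simps) simp
      ultimately show ?thesis using False "1.prems" by (simp add: same_rows_setrow)
    next
      case nT: False
      let ?k = "Min {k. k < length r \<and> x < r ! k}"
      have "same_rows (ins (r ! ?k) (Suc j) (setrow j (b, r[?k := x]) T))
                (ins (r ! ?k) (Suc j) (setrow j (b, r[?k := x]) S'))"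
        by (rule "1.IH"[OF False br[symmetric] nT refl]) (use False "1.prems" in \<open>simp add: same_rows_setrow\<close>)
      moreover have "ins x j T = ins (r ! ?k) (Suc j) (setrow j (b, r[?k := x]) T)"
        using False br nT by (subst ins.simps) (auto simp: Let_def)
      moreover have "ins x j S' = ins (r ! ?k) (Suc j) (setrow j (b, r[?k := x]) S')"
        using False br rj nT by (subst ins.simps) (auto simp: Let_def)
      ultimately show ?thesis by simp
    qed
  qed
qed

text \<open>The value that enters row i when x is inserted into S starting at row j
  (None before row j and once the insertion has come to rest).\<close>

primrec carried :: "tab \<Rightarrow> nat \<Rightarrow> nat \<Rightarrow> nat \<Rightarrow> nat option" where
  "carried S x j 0 = None"
| "carried S x j (Suc i) = (if Suc i < j then None else if Suc i = j then Some x else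
     (case carried S x j i of None \<Rightarrow> None | Some v \<Rightarrow> snd (bump_row (row_entries S i) v)))"

lemma carried_below: "i < j \<Longrightarrow> carried S x j i = None"
  by (cases i) auto

lemma carried_start: "1 \<le> j \<Longrightarrow> carried S x j j = Some x"
  by (cases j) auto

lemma carried_shift:
  assumes "snd (bump_row (row_entries S j) x) = Some y" "\<forall>i>j. rowof S' i = rowof S i" "1 \<le> j" "Suc j \<le> i"
  shows "carried S' y (Suc j) i = carried S x j i"
  using assms(4)
proof (induction i)
  case 0 then show ?case by simp
next
  case (Suc i)
  show ?case
  proof (cases "Suc i = Suc j")
    case True
    then show ?thesis using assms(1,3) carried_start[of j S x] by simp
  next
    case False
    hence ij: "Suc j \<le> i" using Suc.prems by simp
    have "carried S' y (Suc j) (Suc i) = (case carried S' y (Suc j) i of None \<Rightarrow> None | Some v \<Rightarrow> snd (bump_row (row_entries S' i) v))"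
      using ij by simp
    also have "\<dots> = (case carried S x j i of None \<Rightarrow> None | Some v \<Rightarrow> snd (bump_row (row_entries S i) v))"
    proof -
      have r: "rowof S' i = rowof S i" using assms(2) ij by simp
      show ?thesis unfolding Suc.IH[OF ij] r by (rule refl)
    qed
    also have "\<dots> = carried S x j (Suc i)" using ij assms(3) by simp
    finally show ?thesis .
  qed
qed

lemma carried_after_stop:
  assumes "snd (bump_row (row_entries S j) x) = None" "1 \<le> j" "j < i"
  shows "carried S x j i = None"
  using assms(3)
proof (induction i)
  case 0 then show ?case by simp
next
  case (Suc i)
  show ?case
  proof (cases "i = j")
    case True then show ?thesis using assms(1,2) carried_start[of j S x] by simp
  next
    case False
    hence "j < i" using Suc.prems by simp
    then show ?thesis using Suc.IH by simp
  qed
qed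

lemma rowof_ins:
  "1 \<le> j \<Longrightarrow> 1 \<le> i \<Longrightarrow> rowof (ins x j S) i =
     (case carried S x j i of None \<Rightarrow> rowof S i | Some v \<Rightarrow> (row_start S i, fst (bump_row (row_entries S i) v)))"
proof (induction x j S arbitrary: i rule: ins.induct)
  case (1 x j T)
  obtain b r where br: "rowof T j = (b, r)" by fastforce
  have j0: "j \<noteq> 0" using "1.prems" by simp
  show ?case
  proof (cases "\<forall>y\<in>set r. y \<le> x")
    case True
    have e: "ins x j T = setrow j (b, r @ [x]) T" using j0 br True by (subst ins.simps) simp
    have rs: "bump_row r x = (r @ [x], None)" using bump_row_append[OF True] .
    show ?thesis
    proof (cases "i = j")
      case True
      then show ?thesis using e br rs carried_start[of j T x] "1.prems" by (simp add: rowof_setrow)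
    next
      case False
      have "carried T x j i = None"
      proof (cases "i < j")
        case True then show ?thesis by (rule carried_below)
      next
        case False
        hence "j < i" using \<open>i \<noteq> j\<close> by simp
        then show ?thesis using carried_after_stop[of T j x i] br rs "1.prems" by simp
      qed
      then show ?thesis using e False "1.prems" by (simp add: rowof_setrow)
    qed
  next
    case nT: False
    let ?k = "Min {k. k < length r \<and> x < r ! k}"
    define S' where "S' = setrow j (b, r[?k := x]) T"
    have e: "ins x j T = ins (r ! ?k) (Suc j) S'"
      using j0 br nT unfolding S'_def by (subst ins.simps) (auto simp: Let_def)
    have rs: "bump_row r x = (r[?k := x], Some (r ! ?k))" using nT by (simp add: bump_row_def Let_def)
    have IH: "\<And>i. 1 \<le> i \<Longrightarrow> rowof (ins (r ! ?k) (Suc j) S') i =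
       (case carried S' (r ! ?k) (Suc j) i of None \<Rightarrow> rowof S' i | Some v \<Rightarrow> (row_start S' i, fst (bump_row (row_entries S' i) v)))"
      using "1.IH"[OF j0 br[symmetric] nT refl] unfolding S'_def by simp
    have rows: "\<forall>i>j. rowof S' i = rowof T i" using "1.prems" unfolding S'_def by (simp add: rowof_setrow)
    show ?thesis
    proof (cases "i \<le> j")
      case True
      have "carried S' (r ! ?k) (Suc j) i = None" using True by (simp add: carried_below)
      moreover have "rowof S' i = (case carried T x j i of None \<Rightarrow> rowof T i | Some v \<Rightarrow> (row_start T i, fst (bump_row (row_entries T i) v)))"
      proof (cases "i = j")
        case True
        then show ?thesis using br rs carried_start[of j T x] "1.prems" unfolding S'_def by (simp add: rowof_setrow)
      next
        case False
        then show ?thesis using \<open>i \<le> j\<close> carried_below[of i j T x] "1.prems" unfolding S'_def by (simp add: rowof_setrow)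
      qed
      ultimately show ?thesis using e IH[OF "1.prems"(2)] by simp
    next
      case False
      have cvs: "carried S' (r ! ?k) (Suc j) i = carried T x j i"
        by (rule carried_shift) (use rs br rows False "1.prems" in auto)
      show ?thesis using e IH[OF "1.prems"(2)] cvs rows False by (auto split: option.splits)
    qed
  qed
qed

lemma row_start_ins: "1 \<le> j \<Longrightarrow> row_start (ins x j S) i = row_start S i"
  by (cases "i = 0") (auto simp: rowof_ins rowof_def[of _ 0] split: option.splits)

lemma length_row_ins_ge: "1 \<le> j \<Longrightarrow> length (row_entries S i) \<le> length (row_entries (ins x j S) i)"
  by (cases "i = 0") (auto simp: rowof_ins rowof_def[of _ 0] length_bump_row_ge split: option.splits)

definition ins_list :: "nat list \<Rightarrow> nat \<Rightarrow> tab \<Rightarrow> tab" where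
  "ins_list w j S = foldl (\<lambda>U x. ins x j U) S w"

lemma ins_list_single: "ins_list [x] j S = ins x j S" by (simp add: ins_list_def)

lemma ins_list_Cons: "ins_list (x # ws) j S = ins_list ws j (ins x j S)" by (simp add: ins_list_def)

lemma foldl_ext_ins: "foldl (\<lambda>U i. ext_ins U (f i)) X xs = ins_list (map f xs) 1 X"
  by (induction xs arbitrary: X) (simp_all add: ins_list_def ext_ins_def)

lemma same_rows_ins_list: "same_rows S S' \<Longrightarrow> same_rows (ins_list w j S) (ins_list w j S')"
  unfolding ins_list_def by (induction w arbitrary: S S') (auto intro: same_rows_ins)

lemma row_start_ins_list: "1 \<le> j \<Longrightarrow> row_start (ins_list w j S) i = row_start S i"
  by (induction w arbitrary: S) (simp_all add: ins_list_def row_start_ins)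

lemma length_row_ins_list_ge: "1 \<le> j \<Longrightarrow> length (row_entries S i) \<le> length (row_entries (ins_list w j S) i)"
proof (induction w arbitrary: S)
  case Nil then show ?case by (simp add: ins_list_def)
next
  case (Cons x w)
  have "length (row_entries S i) \<le> length (row_entries (ins x j S) i)" using length_row_ins_ge[OF Cons.prems] .
  also have "\<dots> \<le> length (row_entries (ins_list w j (ins x j S)) i)" using Cons.IH[OF Cons.prems] .
  finally show ?case by (simp add: ins_list_def)
qed

text \<open>Inserting the values w one after another starting at row j can be computed row by row:
  row i receives the values row_inputs S j w i, in this order.\<close>

primrec row_inputs :: "tab \<Rightarrow> nat \<Rightarrow> nat list \<Rightarrow> nat \<Rightarrow> nat list" where
  "row_inputs S j w 0 = []"
| "row_inputs S j w (Suc i) = (if Suc i < j then [] else if Suc i = j then w else snd (bump_row_list (row_entries S i) (row_inputs S j w i)))"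

lemma row_inputs_Nil: "row_inputs S j [] i = []"
  by (induction i) auto

lemma rowof_ins_list:
  "1 \<le> j \<Longrightarrow> 1 \<le> i \<Longrightarrow> rowof (ins_list w j S) i = (row_start S i, fst (bump_row_list (row_entries S i) (row_inputs S j w i)))"
proof (induction w arbitrary: i rule: rev_induct)
  case Nil
  then show ?case by (simp add: ins_list_def row_inputs_Nil)
next
  case (snoc x w)
  define Sw where "Sw = ins_list w j S"
  have e: "ins_list (w @ [x]) j S = ins x j Sw" unfolding ins_list_def Sw_def by simp
  have IH: "\<And>i. 1 \<le> i \<Longrightarrow> rowof Sw i = (row_start S i, fst (bump_row_list (row_entries S i) (row_inputs S j w i)))"
    using snoc.IH snoc.prems(1) unfolding Sw_def by simp
  have key: "\<And>i. row_inputs S j (w @ [x]) i = row_inputs S j w i @ option_list (carried Sw x j i)"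
  proof -
    fix i show "row_inputs S j (w @ [x]) i = row_inputs S j w i @ option_list (carried Sw x j i)"
    proof (induction i)
      case 0 then show ?case by simp
    next
      case (Suc i)
      show ?case
      proof (cases "Suc i \<le> j")
        case True then show ?thesis by auto
      next
        case False
        hence ij: "j \<le> i" "1 \<le> i" using snoc.prems(1) by auto
        have "row_inputs S j (w @ [x]) (Suc i) = snd (bump_row_list (row_entries S i) (row_inputs S j w i @ option_list (carried Sw x j i)))"
          using Suc.IH False by simp
        also have "\<dots> = row_inputs S j w (Suc i) @ option_list (carried Sw x j (Suc i))"
          using False IH[OF ij(2)] ij snoc.prems(1)
          by (auto simp: bump_row_list_append split: option.splits prod.splits)
        finally show ?thesis .
      qed
    qed
  qed
  show ?case
    using rowof_ins[OF snoc.prems(1,2), of x Sw] IH[OF snoc.prems(2)] key[of i] e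
    by (auto simp: bump_row_list_append split: option.splits prod.splits)
qed

definition rows_sorted :: "tab \<Rightarrow> bool" where "rows_sorted S \<longleftrightarrow> (\<forall>i\<ge>1. sorted (row_entries S i))"

lemma sorted_row_inputs:
  assumes "rows_sorted P" "sorted w" "1 \<le> i"
  shows "sorted (row_inputs P 1 w i)"
  using assms(3)
proof (induction i rule: nat_induct_at_least)
  case base then show ?case using assms(2) by simp
next
  case (Suc n) then show ?case using sorted_bumped_out[of "row_entries P n"] assms(1) by (simp add: rows_sorted_def)
qed

lemma rows_sorted_setrow: "rows_sorted S \<Longrightarrow> 1 \<le> j \<Longrightarrow> sorted r \<Longrightarrow> rows_sorted (setrow j (b, r) S)"
  by (simp add: rows_sorted_def rowof_setrow)

lemma rows_sorted_ins: "rows_sorted S \<Longrightarrow> 1 \<le> j \<Longrightarrow> rows_sorted (ins x j S)"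
  unfolding rows_sorted_def
proof (intro allI impI)
  fix i :: nat assume s: "\<forall>i\<ge>1. sorted (row_entries S i)" and j: "1 \<le> j" and i: "1 \<le> i"
  show "sorted (row_entries (ins x j S) i)"
    using rowof_ins[OF j i, of x S] s i sorted_bump_row[of "row_entries S i"] by (auto split: option.splits)
qed

lemma carried_same_rows:
  assumes "same_rows S S'" shows "carried S x j i = carried S' x j i"
proof (induction i)
  case 0 show ?case by simp
next
  case (Suc i)
  have r: "rowof S i = rowof S' i" using assms by (simp add: same_rows_def)
  show ?case unfolding carried.simps Suc.IH r by (rule refl)
qed

lemma length_row_ext_ins:
  assumes "1 \<le> i"
  shows "length (row_entries (ins x 1 S) i) = length (row_entries S i) +
     (if \<exists>a. carried S x 1 i = Some a \<and> (\<forall>z\<in>set (row_entries S i). z \<le> a) then 1 else 0)"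
  using rowof_ins[OF _ assms, of 1 x S] length_bump_row by (auto split: option.splits)

lemma carried_before:
  assumes "carried S x 1 g = Some a" "1 \<le> i" "i \<le> g"
  shows "\<exists>a'. carried S x 1 i = Some a'"
  using assms(3,1)
proof (induction g arbitrary: a rule: dec_induct)
  case base then show ?case by simp
next
  case (step n)
  have "1 \<le> n" using assms(2) step.hyps(1) by simp
  then obtain b where "carried S x 1 n = Some b" using step.prems by (cases "carried S x 1 n") auto
  then show ?case using step.IH by simp
qed

text \<open>A row with inner length a and entries A lies directly below a row with inner length b and
  entries C, and the entries increase strictly up every common column.\<close>

definition col_strict :: "nat \<Rightarrow> nat list \<Rightarrow> nat \<Rightarrow> nat list \<Rightarrow> bool" where
  "col_strict a A b C \<longleftrightarrow> (\<forall>c. a < c \<longrightarrow> c \<le> a + length A \<longrightarrow> b < c \<longrightarrow> c \<le> b + length C \<longrightarrow>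
      A ! (c - a - 1) < C ! (c - b - 1))"

lemma col_strict_append_lower:
  "col_strict a A b C \<Longrightarrow> b + length C \<le> a + length A \<Longrightarrow> col_strict a (A @ [x]) b C"
  unfolding col_strict_def by (auto simp: nth_append)

lemma col_strict_append_upper:
  assumes "col_strict a A b C"
    and "a < Suc (b + length C) \<Longrightarrow> Suc (b + length C) \<le> a + length A \<Longrightarrow> A ! (b + length C - a) < x"
  shows "col_strict a A b (C @ [x])"
  unfolding col_strict_def
proof (intro allI impI)
  fix c assume c: "a < c" "c \<le> a + length A" "b < c" "c \<le> b + length (C @ [x])"
  show "A ! (c - a - 1) < (C @ [x]) ! (c - b - 1)"
  proof (cases "c \<le> b + length C")
    case True then show ?thesis using assms(1) c unfolding col_strict_def by (auto simp: nth_append)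
  next
    case False
    then have "c = Suc (b + length C)" using c by simp
    then show ?thesis using assms(2) c by (simp add: nth_append)
  qed
qed

lemma col_strict_update_lower:
  assumes "col_strict a A b C"
    and "b < Suc (a + k) \<Longrightarrow> Suc (a + k) \<le> b + length C \<Longrightarrow> x < C ! (a + k - b)"
  shows "col_strict a (A[k := x]) b C"
  unfolding col_strict_def
proof (intro allI impI)
  fix c assume c: "a < c" "c \<le> a + length (A[k := x])" "b < c" "c \<le> b + length C"
  show "A[k := x] ! (c - a - 1) < C ! (c - b - 1)"
  proof (cases "c = Suc (a + k)")
    case True then show ?thesis using assms(2) c by simp
  next
    case False
    then have "c - a - 1 \<noteq> k" using c by linarith
    then show ?thesis using assms(1) c unfolding col_strict_def by simp
  qed
qed

lemma col_strict_update_upper: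
  assumes "col_strict a A b C"
    and "a < Suc (b + k) \<Longrightarrow> Suc (b + k) \<le> a + length A \<Longrightarrow> A ! (b + k - a) < x"
  shows "col_strict a A b (C[k := x])"
  unfolding col_strict_def
proof (intro allI impI)
  fix c assume c: "a < c" "c \<le> a + length A" "b < c" "c \<le> b + length (C[k := x])"
  show "A ! (c - a - 1) < C[k := x] ! (c - b - 1)"
  proof (cases "c = Suc (b + k)")
    case True then show ?thesis using assms(2) c by simp
  next
    case False
    then have "c - b - 1 \<noteq> k" using c by linarith
    then show ?thesis using assms(1) c unfolding col_strict_def by simp
  qed
qed

lemma col_strict_update_lower_le:
  "col_strict a A b C \<Longrightarrow> x \<le> A ! k \<Longrightarrow> col_strict a (A[k := x]) b C"
  unfolding col_strict_def
proof (intro allI impI)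
  fix c assume cs: "\<forall>c. a < c \<longrightarrow> c \<le> a + length A \<longrightarrow> b < c \<longrightarrow> c \<le> b + length C \<longrightarrow>
      A ! (c - a - 1) < C ! (c - b - 1)" and x: "x \<le> A ! k"
    and c: "a < c" "c \<le> a + length (A[k := x])" "b < c" "c \<le> b + length C"
  have "A ! (c - a - 1) < C ! (c - b - 1)" using cs c by simp
  then show "A[k := x] ! (c - a - 1) < C ! (c - b - 1)"
    using x c by (cases "c - a - 1 = k") auto
qed

lemma col_strict_update_upper_ge:
  "col_strict a A b C \<Longrightarrow> C ! k \<le> x \<Longrightarrow> col_strict a A b (C[k := x])"
  unfolding col_strict_def
proof (intro allI impI)
  fix c assume cs: "\<forall>c. a < c \<longrightarrow> c \<le> a + length A \<longrightarrow> b < c \<longrightarrow> c \<le> b + length C \<longrightarrow>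
      A ! (c - a - 1) < C ! (c - b - 1)" and x: "C ! k \<le> x"
    and c: "a < c" "c \<le> a + length A" "b < c" "c \<le> b + length (C[k := x])"
  have "A ! (c - a - 1) < C ! (c - b - 1)" using cs c by simp
  then show "A ! (c - a - 1) < C[k := x] ! (c - b - 1)"
    using x c by (cases "c - b - 1 = k") auto
qed

lemma col_strict_Cons_lower:
  assumes "col_strict a A b C" "1 \<le> a"
    and "b < a \<Longrightarrow> a \<le> b + length C \<Longrightarrow> x < C ! (a - b - 1)"
  shows "col_strict (a - 1) (x # A) b C"
  unfolding col_strict_def
proof (intro allI impI)
  fix c assume c: "a - 1 < c" "c \<le> a - 1 + length (x # A)" "b < c" "c \<le> b + length C"
  show "(x # A) ! (c - (a - 1) - 1) < C ! (c - b - 1)"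
  proof (cases "c = a")
    case True then show ?thesis using assms(2,3) c by simp
  next
    case False
    then have "c - (a - 1) - 1 = Suc (c - a - 1)" using c assms(2) by linarith
    then show ?thesis using assms(1) c False unfolding col_strict_def by simp
  qed
qed

lemma col_strict_Cons_upper:
  assumes "col_strict a A b C" "b \<le> a" "1 \<le> b"
  shows "col_strict a A (b - 1) (x # C)"
  unfolding col_strict_def
proof (intro allI impI)
  fix c assume c: "a < c" "c \<le> a + length A" "b - 1 < c" "c \<le> b - 1 + length (x # C)"
  then have "c - (b - 1) - 1 = Suc (c - b - 1)" using assms(2,3) by linarith
  then show "A ! (c - a - 1) < (x # C) ! (c - (b - 1) - 1)"
    using assms c unfolding col_strict_def by simp
qed

lemma col_strict_butlast_lower: "col_strict a A b C \<Longrightarrow> col_strict a (butlast A) b C"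
  unfolding col_strict_def by (auto simp: nth_butlast)

lemma col_strict_butlast_upper: "col_strict a A b C \<Longrightarrow> col_strict a A b (butlast C)"
  unfolding col_strict_def by (auto simp: nth_butlast)

text \<open>The row-by-row form of being an SSYT whose inner and outer shapes are partitions
  (see wf_tab_is_ssyt and wf_tab_if_ssyt_of_shape).\<close>

definition wf_tab :: "tab \<Rightarrow> bool" where
  "wf_tab S \<longleftrightarrow> (\<forall>j\<ge>1. sorted (row_entries S j) \<and> (\<forall>y\<in>set (row_entries S j). 0 < y) \<and>
      row_start S (Suc j) \<le> row_start S j \<and> row_end S (Suc j) \<le> row_end S j \<and>
      col_strict (row_start S j) (row_entries S j) (row_start S (Suc j)) (row_entries S (Suc j)))"

lemma wf_tabD:
  assumes "wf_tab S" "1 \<le> j"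
  shows "sorted (row_entries S j)" "\<forall>y\<in>set (row_entries S j). 0 < y" "row_start S (Suc j) \<le> row_start S j" "row_end S (Suc j) \<le> row_end S j"
    "col_strict (row_start S j) (row_entries S j) (row_start S (Suc j)) (row_entries S (Suc j))"
  using assms unfolding wf_tab_def by auto

lemma wf_tab_rows_sorted: "wf_tab S \<Longrightarrow> rows_sorted S"
  by (simp add: rows_sorted_def wf_tabD)

lemma wf_tab_same_rows: "same_rows S S' \<Longrightarrow> wf_tab S \<Longrightarrow> wf_tab S'"
  unfolding wf_tab_def same_rows_def col_strict_def by simp

lemma wf_tab_setrow:
  assumes g: "wf_tab S" and j: "1 \<le> j"
    and s: "sorted r'" and p: "\<forall>y\<in>set r'. 0 < y"
    and b1: "row_start S (Suc j) \<le> b'" and b2: "2 \<le> j \<Longrightarrow> b' \<le> row_start S (j - 1)"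
    and o1: "row_end S (Suc j) \<le> b' + length r'" and o2: "2 \<le> j \<Longrightarrow> b' + length r' \<le> row_end S (j - 1)"
    and c1: "col_strict b' r' (row_start S (Suc j)) (row_entries S (Suc j))"
    and c2: "2 \<le> j \<Longrightarrow> col_strict (row_start S (j - 1)) (row_entries S (j - 1)) b' r'"
  shows "wf_tab (setrow j (b', r') S)"
  unfolding wf_tab_def
proof (intro allI impI)
  fix i :: nat assume i: "1 \<le> i"
  let ?S = "setrow j (b', r') S"
  have rw: "\<And>t. rowof ?S t = (if t = j then (b', r') else rowof S t)" using j by (simp add: rowof_setrow)
  consider "i = j" | "Suc i = j" | "i \<noteq> j" "Suc i \<noteq> j" by blast
  then show "sorted (row_entries ?S i) \<and> (\<forall>y\<in>set (row_entries ?S i). 0 < y) \<and> row_start ?S (Suc i) \<le> row_start ?S i \<and>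
      row_end ?S (Suc i) \<le> row_end ?S i \<and> col_strict (row_start ?S i) (row_entries ?S i) (row_start ?S (Suc i)) (row_entries ?S (Suc i))"
  proof cases
    case 1
    then show ?thesis using rw s p b1 o1 c1 by simp
  next
    case 2
    hence "2 \<le> j" "i = j - 1" using i by auto
    then show ?thesis using rw b2 o2 c2 wf_tabD[OF g i] 2 by auto
  next
    case 3
    then show ?thesis using rw wf_tabD[OF g i] by simp
  qed
qed

lemma wf_tab_row_facts:
  assumes g: "wf_tab T" and j: "1 \<le> j" and br: "rowof T j = (b, r)"
  shows "sorted r" "\<forall>y\<in>set r. 0 < y"
    "row_start T (Suc j) \<le> b" "row_end T (Suc j) \<le> b + length r"
    "col_strict b r (row_start T (Suc j)) (row_entries T (Suc j))"
    "2 \<le> j \<Longrightarrow> b \<le> row_start T (j - 1)" "2 \<le> j \<Longrightarrow> b + length r \<le> row_end T (j - 1)"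
    "2 \<le> j \<Longrightarrow> col_strict (row_start T (j - 1)) (row_entries T (j - 1)) b r"
  using wf_tabD[OF g j] wf_tabD[OF g, of "j - 1"] br by (auto simp: Suc_diff_1)

text \<open>x is inserted into row j, having been bumped out of column c of row j - 1 (if j \<ge> 2);
  everything left of it there is smaller than x, and x is smaller than the old entry above it.\<close>

definition ins_slot :: "tab \<Rightarrow> nat \<Rightarrow> nat \<Rightarrow> nat \<Rightarrow> bool" where
  "ins_slot S x j c \<longleftrightarrow> (2 \<le> j \<longrightarrow> (row_start S (j - 1) < c \<and> c \<le> row_end S (j - 1) \<and>
     (\<forall>c'. row_start S (j - 1) < c' \<longrightarrow> c' \<le> c \<longrightarrow> row_entries S (j - 1) ! (c' - row_start S (j - 1) - 1) < x) \<and>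
     (row_start S j < c \<longrightarrow> c \<le> row_end S j \<longrightarrow> x < row_entries S j ! (c - row_start S j - 1))))"

lemma ins_slotD:
  assumes "ins_slot T x j c" "rowof T j = (b, r)" "2 \<le> j"
  shows "row_start T (j - 1) < c" "c \<le> row_end T (j - 1)"
    "\<And>c'. row_start T (j - 1) < c' \<Longrightarrow> c' \<le> c \<Longrightarrow>
       row_entries T (j - 1) ! (c' - row_start T (j - 1) - 1) < x"
    "b < c \<Longrightarrow> c \<le> b + length r \<Longrightarrow> x < r ! (c - b - 1)"
  using assms unfolding ins_slot_def by auto

lemma wf_tab_setrow_append:
  assumes g: "wf_tab T" and j: "1 \<le> j" and br: "rowof T j = (b, r)"
    and le: "\<forall>y\<in>set r. y \<le> x" and x0: "0 < x" and Q: "ins_slot T x j c"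
  shows "wf_tab (setrow j (b, r @ [x]) T)"
proof -
  note R = wf_tab_row_facts[OF g j br]
  note Qj = ins_slotD[OF Q br]
  have right: "b + length r < c" if j2: "2 \<le> j"
  proof (rule ccontr)
    assume "\<not> b + length r < c"
    moreover have "b < c" using Qj(1)[OF j2] R(6)[OF j2] by linarith
    ultimately have "x < r ! (c - b - 1)" "c - b - 1 < length r" using Qj(4)[OF j2] by auto
    then show False using le by (meson leD nth_mem)
  qed
  show ?thesis
  proof (rule wf_tab_setrow[OF g j])
    show "sorted (r @ [x])" using R(1) le by (simp add: sorted_append)
    show "\<forall>y\<in>set (r @ [x]). 0 < y" using R(2) x0 by simp
    show "row_start T (Suc j) \<le> b" by (rule R(3))
    show "2 \<le> j \<Longrightarrow> b \<le> row_start T (j - 1)" by (rule R(6))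
    show "row_end T (Suc j) \<le> b + length (r @ [x])" using R(4) by simp
    show "2 \<le> j \<Longrightarrow> b + length (r @ [x]) \<le> row_end T (j - 1)" using right Qj(2) by fastforce
    show "col_strict b (r @ [x]) (row_start T (Suc j)) (row_entries T (Suc j))"
      using col_strict_append_lower[OF R(5)] R(4) by simp
  next
    assume j2: "2 \<le> j"
    show "col_strict (row_start T (j - 1)) (row_entries T (j - 1)) b (r @ [x])"
    proof (rule col_strict_append_upper[OF R(8)[OF j2]])
      assume "row_start T (j - 1) < Suc (b + length r)"
      with Qj(3)[OF j2 this] right[OF j2]
      show "row_entries T (j - 1) ! (b + length r - row_start T (j - 1)) < x" by simp
    qed
  qed
qed

lemma wf_tab_setrow_bump:
  assumes g: "wf_tab T" and j: "1 \<le> j" and br: "rowof T j = (b, r)"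
    and nle: "\<not> (\<forall>y\<in>set r. y \<le> x)" and x0: "0 < x" and Q: "ins_slot T x j c"
  defines "k \<equiv> Min {k. k < length r \<and> x < r ! k}"
  shows "wf_tab (setrow j (b, r[k := x]) T)" "ins_slot (setrow j (b, r[k := x]) T) (r ! k) (Suc j) (b + k + 1)"
proof -
  note R = wf_tab_row_facts[OF g j br]
  note Qj = ins_slotD[OF Q br]
  note fk = first_greater_index[OF nle, folded k_def]
  have k_le: "k \<le> c - b - 1" if j2: "2 \<le> j" and "c \<le> b + length r"
  proof -
    have "b < c" using Qj(1)[OF j2] R(6)[OF j2] by linarith
    then have "c - b - 1 < length r" "x < r ! (c - b - 1)" using that Qj(4)[OF j2] by auto
    then show ?thesis unfolding k_def by (simp add: Min_le)
  qed
  have left: "b + k + 1 \<le> c" if j2: "2 \<le> j"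
    using k_le[OF j2] fk(1) Qj(1)[OF j2] R(6)[OF j2] by (cases "c \<le> b + length r") linarith+
  show "wf_tab (setrow j (b, r[k := x]) T)"
  proof (rule wf_tab_setrow[OF g j])
    show "sorted (r[k := x])" using sorted_update_first_greater[OF R(1) fk] .
    show "\<forall>y\<in>set (r[k := x]). 0 < y" using R(2) x0 set_update_subset_insert[of r k x] by blast
    show "row_start T (Suc j) \<le> b" by (rule R(3))
    show "2 \<le> j \<Longrightarrow> b \<le> row_start T (j - 1)" by (rule R(6))
    show "row_end T (Suc j) \<le> b + length (r[k := x])" using R(4) by simp
    show "2 \<le> j \<Longrightarrow> b + length (r[k := x]) \<le> row_end T (j - 1)" using R(7) by simp
    show "col_strict b (r[k := x]) (row_start T (Suc j)) (row_entries T (Suc j))"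
      by (rule col_strict_update_lower_le[OF R(5)]) (use fk(2) in simp)
  next
    assume j2: "2 \<le> j"
    show "col_strict (row_start T (j - 1)) (row_entries T (j - 1)) b (r[k := x])"
    proof (rule col_strict_update_upper[OF R(8)[OF j2]])
      assume "row_start T (j - 1) < Suc (b + k)"
      with Qj(3)[OF j2 this] left[OF j2]
      show "row_entries T (j - 1) ! (b + k - row_start T (j - 1)) < x" by simp
    qed
  qed
  let ?S = "setrow j (b, r[k := x]) T"
  have rS: "rowof ?S j = (b, r[k := x])" "rowof ?S (Suc j) = rowof T (Suc j)"
    using j by (simp_all add: rowof_setrow)
  show "ins_slot ?S (r ! k) (Suc j) (b + k + 1)"
    unfolding ins_slot_def
  proof (intro impI conjI allI)
    show "row_start ?S (Suc j - 1) < b + k + 1" "b + k + 1 \<le> row_end ?S (Suc j - 1)"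
      using rS fk(1) by simp_all
    fix c' assume a: "row_start ?S (Suc j - 1) < c'" "c' \<le> b + k + 1"
    show "row_entries ?S (Suc j - 1) ! (c' - row_start ?S (Suc j - 1) - 1) < r ! k"
    proof (cases "c' - b - 1 = k")
      case True then show ?thesis using rS fk by simp
    next
      case False
      then have "r ! (c' - b - 1) \<le> x" using a rS fk(3) by simp
      then show ?thesis using rS fk False by simp
    qed
  next
    assume a: "row_start ?S (Suc j) < b + k + 1" "b + k + 1 \<le> row_end ?S (Suc j)"
    have "r ! (b + k + 1 - b - 1) < row_entries T (Suc j) ! (b + k + 1 - row_start T (Suc j) - 1)"
      using spec[OF R(5)[unfolded col_strict_def], of "b + k + 1"] fk(1) a rS by simp
    then show "r ! k < row_entries ?S (Suc j) ! (b + k + 1 - row_start ?S (Suc j) - 1)"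
      using rS by simp
  qed
qed

lemma wf_tab_ins:
  "wf_tab S \<Longrightarrow> 1 \<le> j \<Longrightarrow> 0 < x \<Longrightarrow> ins_slot S x j c \<Longrightarrow> wf_tab (ins x j S)"
proof (induction x j S arbitrary: c rule: ins.induct)
  case (1 x j T)
  obtain b r where br: "rowof T j = (b, r)" by fastforce
  have j0: "j \<noteq> 0" using "1.prems"(2) by simp
  show ?case
  proof (cases "\<forall>y\<in>set r. y \<le> x")
    case True
    then show ?thesis using wf_tab_setrow_append[OF "1.prems"(1,2) br True "1.prems"(3,4)] j0 br
      by (subst ins.simps) simp
  next
    case nle: False
    let ?k = "Min {k. k < length r \<and> x < r ! k}"
    note B = wf_tab_setrow_bump[OF "1.prems"(1,2) br nle "1.prems"(3,4)]
    have "0 < r ! ?k" using wf_tab_row_facts(2)[OF "1.prems"(1,2) br] first_greater_index(1)[OF nle] by simp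
    then have "wf_tab (ins (r ! ?k) (Suc j) (setrow j (b, r[?k := x]) T))"
      using "1.IH"[OF j0 br[symmetric] nle refl] B by simp
    then show ?thesis using j0 br nle by (subst ins.simps) (auto simp: Let_def)
  qed
qed

lemma wf_tab_ext_ins: "wf_tab S \<Longrightarrow> 0 < x \<Longrightarrow> wf_tab (ins x 1 S)"
  by (rule wf_tab_ins[of S 1 x 0]) (auto simp: ins_slot_def)

lemma wf_tab_ins_list: "wf_tab S \<Longrightarrow> \<forall>x\<in>set w. 0 < x \<Longrightarrow> wf_tab (ins_list w 1 S)"
proof (induction w arbitrary: S)
  case Nil then show ?case by (simp add: ins_list_def)
next
  case (Cons x w)
  have "wf_tab (ins x 1 S)" using wf_tab_ext_ins[of S x] Cons.prems by simp
  then show ?case using Cons.IH[of "ins x 1 S"] Cons.prems by (simp add: ins_list_def)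
qed

lemma last_smaller_index:
  assumes "\<not> (\<forall>y\<in>set (R::nat list). x \<le> y)"
  shows "Max {k. k < length R \<and> R ! k < x} < length R"
    "R ! Max {k. k < length R \<and> R ! k < x} < x"
    "\<forall>i. Max {k. k < length R \<and> R ! k < x} < i \<longrightarrow> i < length R \<longrightarrow> x \<le> R ! i"
proof -
  let ?A = "{k. k < length R \<and> R ! k < x}"
  have fin: "finite ?A" by simp
  obtain y where "y \<in> set R" "\<not> x \<le> y" using assms by blast
  then obtain i0 where "i0 < length R" "R ! i0 < x" by (auto simp: in_set_conv_nth)
  hence ne: "?A \<noteq> {}" by auto
  have "Max ?A \<in> ?A" using Max_in[OF fin ne] .
  then show "Max ?A < length R" "R ! Max ?A < x" by auto
  show "\<forall>i. Max ?A < i \<longrightarrow> i < length R \<longrightarrow> x \<le> R ! i"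
  proof (intro allI impI)
    fix i assume i: "Max ?A < i" "i < length R"
    show "x \<le> R ! i"
    proof (rule ccontr)
      assume "\<not> x \<le> R ! i"
      hence "i \<in> ?A" using i by auto
      hence "i \<le> Max ?A" using fin by simp
      thus False using i by simp
    qed
  qed
qed

lemma sorted_update_last_smaller:
  assumes "sorted R" "K < length R" "R ! K < (x::nat)" "\<forall>i. K < i \<longrightarrow> i < length R \<longrightarrow> x \<le> R ! i"
  shows "sorted (R[K := x])"
  unfolding sorted_iff_nth_mono
proof (intro allI impI)
  fix i j assume ij: "i \<le> j" "j < length (R[K := x])"
  have s: "\<And>a b. a \<le> b \<Longrightarrow> b < length R \<Longrightarrow> R ! a \<le> R ! b"
    using assms(1) by (simp add: sorted_iff_nth_mono)
  show "R[K := x] ! i \<le> R[K := x] ! j"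
  proof (cases "i = K")
    case True
    then show ?thesis using ij assms(3,4) by (cases "j = K") (auto simp: nth_list_update)
  next
    case iK: False
    show ?thesis
    proof (cases "j = K")
      case True
      hence "i < K" using ij iK by simp
      then show ?thesis using True ij s[of i K] assms(2,3) iK by (simp add: nth_list_update)
    next
      case False
      then show ?thesis using ij iK s[of i j] by (simp add: nth_list_update)
    qed
  qed
qed

text \<open>x is reverse-inserted into row r, having been bumped out of column c of row r + 1 (if r \<ge> 1);
  everything right of it there is larger than x, and x is larger than the old entry below it.\<close>

definition revins_slot :: "tab \<Rightarrow> nat \<Rightarrow> nat \<Rightarrow> nat \<Rightarrow> bool" where
  "revins_slot S x r c \<longleftrightarrow> (1 \<le> r \<longrightarrow> (c \<le> row_end S r \<and> row_start S (Suc r) < c \<and>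
     (\<forall>c'. c \<le> c' \<longrightarrow> row_start S (Suc r) < c' \<longrightarrow> c' \<le> row_end S (Suc r) \<longrightarrow>
        x < row_entries S (Suc r) ! (c' - row_start S (Suc r) - 1)) \<and>
     (row_start S r < c \<longrightarrow> c \<le> row_end S r \<longrightarrow> row_entries S r ! (c - row_start S r - 1) < x)))"

lemma revins_slotD:
  assumes "revins_slot T x p c" "rowof T p = (b, R)" "1 \<le> p"
  shows "c \<le> b + length R" "row_start T (Suc p) < c"
    "\<And>c'. c \<le> c' \<Longrightarrow> row_start T (Suc p) < c' \<Longrightarrow> c' \<le> row_end T (Suc p) \<Longrightarrow>
       x < row_entries T (Suc p) ! (c' - row_start T (Suc p) - 1)"
    "b < c \<Longrightarrow> c \<le> b + length R \<Longrightarrow> R ! (c - b - 1) < x"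
  using assms unfolding revins_slot_def by auto

lemma revins_row_le: "fst (snd (revins x r S)) \<le> r"
proof (induction x r S rule: revins.induct)
  case (1 x T) then show ?case by simp
next
  case (2 x r T)
  obtain b R where br: "rowof T (Suc r) = (b, R)" by fastforce
  show ?case
  proof (cases "\<forall>y\<in>set R. x \<le> y")
    case True then show ?thesis using br by simp
  next
    case False
    then show ?thesis using br "2.IH"[OF br[symmetric] False refl] by (simp add: Let_def)
  qed
qed

lemma wf_tab_setrow_prepend:
  assumes g: "wf_tab T" and p: "1 \<le> p" and br: "rowof T p = (b, R)"
    and ge: "\<forall>y\<in>set R. x \<le> y" and x0: "0 < x" and Q: "revins_slot T x p c"
  shows "wf_tab (setrow p (b - 1, x # R) T)" "1 \<le> b"
proof -
  note R = wf_tab_row_facts[OF g p br]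
  note Qj = revins_slotD[OF Q br p]
  have cb: "c \<le> b"
  proof (rule ccontr)
    assume "\<not> c \<le> b"
    then have "R ! (c - b - 1) < x" "c - b - 1 < length R" using Qj(1,4) by auto
    then show False using ge by (meson leD nth_mem)
  qed
  then show b1: "1 \<le> b" using Qj(2) by linarith
  show "wf_tab (setrow p (b - 1, x # R) T)"
  proof (rule wf_tab_setrow[OF g p])
    show "sorted (x # R)" using R(1) ge by simp
    show "\<forall>y\<in>set (x # R). 0 < y" using R(2) x0 by simp
    show "row_start T (Suc p) \<le> b - 1" using cb Qj(2) by linarith
    show "2 \<le> p \<Longrightarrow> b - 1 \<le> row_start T (p - 1)" using R(6) by fastforce
    show "row_end T (Suc p) \<le> b - 1 + length (x # R)" using R(4) b1 by simp
    show "2 \<le> p \<Longrightarrow> b - 1 + length (x # R) \<le> row_end T (p - 1)" using R(7) b1 by simp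
    show "col_strict (b - 1) (x # R) (row_start T (Suc p)) (row_entries T (Suc p))"
      by (rule col_strict_Cons_lower[OF R(5) b1]) (use Qj(3)[OF cb] in simp)
    show "2 \<le> p \<Longrightarrow> col_strict (row_start T (p - 1)) (row_entries T (p - 1)) (b - 1) (x # R)"
      using col_strict_Cons_upper[OF R(8) R(6) b1] by simp
  qed
qed

lemma wf_tab_setrow_revbump:
  assumes g: "wf_tab T" and r: "rowof T (Suc r) = (b, R)"
    and nge: "\<not> (\<forall>y\<in>set R. x \<le> y)" and x0: "0 < x" and Q: "revins_slot T x (Suc r) c"
  defines "K \<equiv> Max {k. k < length R \<and> R ! k < x}"
  shows "wf_tab (setrow (Suc r) (b, R[K := x]) T)"
    "revins_slot (setrow (Suc r) (b, R[K := x]) T) (R ! K) r (b + K + 1)"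
proof -
  have p: "1 \<le> Suc r" by simp
  note R = wf_tab_row_facts[OF g p r]
  note Qj = revins_slotD[OF Q r p]
  note lk = last_smaller_index[OF nge, folded K_def]
  have right: "c \<le> b + K + 1"
  proof (cases "b < c")
    case True
    then have "R ! (c - b - 1) < x" "c - b - 1 < length R" using Qj(1,4) by auto
    then have "c - b - 1 \<le> K" unfolding K_def by (simp add: Max_ge)
    then show ?thesis using True by linarith
  qed simp
  show "wf_tab (setrow (Suc r) (b, R[K := x]) T)"
  proof (rule wf_tab_setrow[OF g p])
    show "sorted (R[K := x])" using sorted_update_last_smaller[OF R(1) lk] .
    show "\<forall>y\<in>set (R[K := x]). 0 < y" using R(2) x0 set_update_subset_insert[of R K x] by blast
    show "row_start T (Suc (Suc r)) \<le> b" by (rule R(3))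
    show "2 \<le> Suc r \<Longrightarrow> b \<le> row_start T (Suc r - 1)" by (rule R(6))
    show "row_end T (Suc (Suc r)) \<le> b + length (R[K := x])" using R(4) by simp
    show "2 \<le> Suc r \<Longrightarrow> b + length (R[K := x]) \<le> row_end T (Suc r - 1)" using R(7) by simp
    show "col_strict b (R[K := x]) (row_start T (Suc (Suc r))) (row_entries T (Suc (Suc r)))"
    proof (rule col_strict_update_lower[OF R(5)])
      assume "row_start T (Suc (Suc r)) < Suc (b + K)" "Suc (b + K) \<le> row_end T (Suc (Suc r))"
      with Qj(3)[of "Suc (b + K)"] right
      show "x < row_entries T (Suc (Suc r)) ! (b + K - row_start T (Suc (Suc r)))" by simp
    qed
    show "2 \<le> Suc r \<Longrightarrow> col_strict (row_start T (Suc r - 1)) (row_entries T (Suc r - 1)) b (R[K := x])"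
      using col_strict_update_upper_ge[OF R(8)] lk(2) by simp
  qed
  let ?S = "setrow (Suc r) (b, R[K := x]) T"
  have rS: "rowof ?S (Suc r) = (b, R[K := x])" "rowof ?S r = rowof T r"
    by (simp_all add: rowof_setrow)
  show "revins_slot ?S (R ! K) r (b + K + 1)"
    unfolding revins_slot_def
  proof (intro impI conjI allI)
    assume r1: "1 \<le> r"
    show "b + K + 1 \<le> row_end ?S r" using rS R(7) lk(1) r1 by simp
    show "row_start ?S (Suc r) < b + K + 1" using rS by simp
    fix c' assume a: "b + K + 1 \<le> c'" "row_start ?S (Suc r) < c'" "c' \<le> row_end ?S (Suc r)"
    show "R ! K < row_entries ?S (Suc r) ! (c' - row_start ?S (Suc r) - 1)"
    proof (cases "c' - b - 1 = K")
      case True then show ?thesis using rS lk by simp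
    next
      case False
      then have "x \<le> R ! (c' - b - 1)" using a rS lk(3) by simp
      then show ?thesis using rS lk False by simp
    qed
  next
    assume r1: "1 \<le> r" and a: "row_start ?S r < b + K + 1" "b + K + 1 \<le> row_end ?S r"
    have "row_entries T r ! (b + K + 1 - row_start T r - 1) < R ! (b + K + 1 - b - 1)"
      using spec[OF R(8)[unfolded col_strict_def], of "b + K + 1"] lk(1) a rS r1 by simp
    then show "row_entries ?S r ! (b + K + 1 - row_start ?S r - 1) < R ! K" using rS by simp
  qed
qed

lemma wf_tab_revins:
  "wf_tab S \<Longrightarrow> 0 < x \<Longrightarrow> revins_slot S x r c \<Longrightarrow> wf_tab (fst (revins x r S)) \<and>
     (1 \<le> fst (snd (revins x r S)) \<longrightarrow> 1 \<le> row_start S (fst (snd (revins x r S))))"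
proof (induction x r S arbitrary: c rule: revins.induct)
  case (1 x T)
  then show ?case by simp
next
  case (2 x r T)
  obtain b R where br: "rowof T (Suc r) = (b, R)" by fastforce
  show ?case
  proof (cases "\<forall>y\<in>set R. x \<le> y")
    case True
    then show ?thesis using wf_tab_setrow_prepend[OF "2.prems"(1) _ br True "2.prems"(2,3)] br by simp
  next
    case nge: False
    let ?K = "Max {k. k < length R \<and> R ! k < x}"
    let ?S = "setrow (Suc r) (b, R[?K := x]) T"
    note B = wf_tab_setrow_revbump[OF "2.prems"(1) br nge "2.prems"(2,3)]
    have "0 < R ! ?K" using wf_tab_row_facts(2)[OF "2.prems"(1) _ br] last_smaller_index(1)[OF nge] by simp
    then have IH: "wf_tab (fst (revins (R ! ?K) r ?S)) \<and>
        (1 \<le> fst (snd (revins (R ! ?K) r ?S)) \<longrightarrow> 1 \<le> row_start ?S (fst (snd (revins (R ! ?K) r ?S))))"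
      using "2.IH"[OF br[symmetric] nge refl] B by blast
    have "row_start ?S (fst (snd (revins (R ! ?K) r ?S))) = row_start T (fst (snd (revins (R ! ?K) r ?S)))"
      using revins_row_le[of "R ! ?K" r ?S] by (simp add: rowof_setrow)
    moreover have "revins x (Suc r) T = revins (R ! ?K) r ?S" using br nge by (auto simp: Let_def)
    ultimately show ?thesis using IH by simp
  qed
qed

lemma rev_corner_unfold: "rowof T j = (b, R) \<Longrightarrow> rev_corner T (cl, j) = revins (last R) (j - 1) (setrow j (b, butlast R) T)"
  by (simp add: rev_corner_def Let_def)

lemma butlast_le_last: "sorted R \<Longrightarrow> R \<noteq> [] \<Longrightarrow> \<forall>y\<in>set (butlast R). y \<le> last R"
proof -
  assume "sorted R" "R \<noteq> []"
  hence "sorted (butlast R @ [last R])" by simp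
  thus ?thesis by (simp add: sorted_append)
qed

lemma wf_tab_setrow_butlast:
  assumes g: "wf_tab T" and j: "1 \<le> j" and br: "rowof T j = (b, R)" and ne: "R \<noteq> []"
    and corner: "row_end T (Suc j) < row_end T j"
  shows "wf_tab (setrow j (b, butlast R) T)"
proof -
  note R = wf_tab_row_facts[OF g j br]
  show ?thesis
  proof (rule wf_tab_setrow[OF g j])
    show "sorted (butlast R)" using sorted_butlast[OF R(1)] .
    show "\<forall>y\<in>set (butlast R). 0 < y" using R(2) by (meson in_set_butlastD)
    show "row_end T (Suc j) \<le> b + length (butlast R)" using corner br ne by simp
    show "2 \<le> j \<Longrightarrow> b + length (butlast R) \<le> row_end T (j - 1)" using R(7) by simp
  qed (use R col_strict_butlast_lower col_strict_butlast_upper in auto)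
qed

lemma revins_slot_last:
  assumes g: "wf_tab T" and j: "1 \<le> j" and br: "rowof T j = (b, R)" and ne: "R \<noteq> []"
  shows "revins_slot (setrow j (b, butlast R) T) (last R) (j - 1) (b + length R)"
proof -
  note R = wf_tab_row_facts[OF g j br]
  let ?S = "setrow j (b, butlast R) T"
  have "j - 1 \<noteq> j" using j by simp
  then have rS: "rowof ?S j = (b, butlast R)" "rowof ?S (j - 1) = rowof T (j - 1)"
    using j by (simp_all add: rowof_setrow)
  show ?thesis
    unfolding revins_slot_def
  proof (intro impI conjI allI)
    assume j1: "1 \<le> j - 1"
    then have jj: "Suc (j - 1) = j" and j2: "2 \<le> j" by simp_all
    show "b + length R \<le> row_end ?S (j - 1)" using rS R(7)[OF j2] by simp
    show "row_start ?S (Suc (j - 1)) < b + length R" unfolding jj rS using ne by simp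
    fix c' assume "b + length R \<le> c'" "row_start ?S (Suc (j - 1)) < c'" "c' \<le> row_end ?S (Suc (j - 1))"
    then show "last R < row_entries ?S (Suc (j - 1)) ! (c' - row_start ?S (Suc (j - 1)) - 1)"
      unfolding jj rS using ne by simp
  next
    assume j1: "1 \<le> j - 1" and a: "row_start ?S (j - 1) < b + length R" "b + length R \<le> row_end ?S (j - 1)"
    then have j2: "2 \<le> j" by simp
    have "row_entries T (j - 1) ! (b + length R - row_start T (j - 1) - 1) < R ! (b + length R - b - 1)"
      using spec[OF R(8)[OF j2, unfolded col_strict_def], of "b + length R"] a rS ne by simp
    then show "row_entries ?S (j - 1) ! (b + length R - row_start ?S (j - 1) - 1) < last R"
      using rS ne by (simp add: last_conv_nth)
  qed
qed

lemma wf_tab_rev_corner: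
  assumes g: "wf_tab T" and j: "1 \<le> j" and br: "rowof T j = (b, R)" and ne: "R \<noteq> []"
    and corner: "row_end T (Suc j) < row_end T j"
  shows "wf_tab (fst (rev_corner T (cl, j))) \<and>
    (1 \<le> fst (snd (rev_corner T (cl, j))) \<longrightarrow> 1 \<le> row_start T (fst (snd (rev_corner T (cl, j)))))"
proof -
  let ?S = "setrow j (b, butlast R) T"
  have "0 < last R" using wf_tab_row_facts(2)[OF g j br] ne by simp
  then have "wf_tab (fst (revins (last R) (j - 1) ?S)) \<and>
     (1 \<le> fst (snd (revins (last R) (j - 1) ?S)) \<longrightarrow> 1 \<le> row_start ?S (fst (snd (revins (last R) (j - 1) ?S))))"
    by (rule wf_tab_revins[OF wf_tab_setrow_butlast[OF assms] _ revins_slot_last[OF g j br ne]])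
  moreover have "fst (snd (revins (last R) (j - 1) ?S)) \<noteq> j" using revins_row_le[of "last R" "j - 1" ?S] j by simp
  ultimately show ?thesis using rev_corner_unfold[OF br] j by (simp add: rowof_setrow)
qed

section \<open>Reverse insertion is undone by insertion\<close>

lemma revins_rows:
  "revins x r S = (S', l, v) \<Longrightarrow> l \<le> r \<and> (\<forall>i. (i < l \<or> r < i) \<longrightarrow> rowof S' i = rowof S i) \<and>
     (\<forall>i. i \<noteq> l \<longrightarrow> row_start S' i = row_start S i \<and> length (row_entries S' i) = length (row_entries S i)) \<and>
     (1 \<le> l \<longrightarrow> rowof S' l = (row_start S l - 1, v # row_entries S l))"
proof (induction x r S arbitrary: S' l v rule: revins.induct)
  case (1 x T)
  then show ?case by simp
next
  case (2 x r T)
  obtain b R where br: "rowof T (Suc r) = (b, R)" by fastforce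
  show ?case
  proof (cases "\<forall>y\<in>set R. x \<le> y")
    case True
    then have "S' = setrow (Suc r) (b - 1, x # R) T" "l = Suc r" "v = x" using "2.prems" br by auto
    then show ?thesis using br by (auto simp: rowof_setrow)
  next
    case nT: False
    let ?K = "Max {k. k < length R \<and> R ! k < x}"
    define S1 where "S1 = setrow (Suc r) (b, R[?K := x]) T"
    have e: "revins (R ! ?K) r S1 = (S', l, v)" using "2.prems" br nT unfolding S1_def by (auto simp: Let_def)
    have IH: "l \<le> r \<and> (\<forall>i. (i < l \<or> r < i) \<longrightarrow> rowof S' i = rowof S1 i) \<and>
     (\<forall>i. i \<noteq> l \<longrightarrow> row_start S' i = row_start S1 i \<and> length (row_entries S' i) = length (row_entries S1 i)) \<and>
     (1 \<le> l \<longrightarrow> rowof S' l = (row_start S1 l - 1, v # row_entries S1 l))"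
      using "2.IH"[OF br[symmetric] nT refl, folded S1_def] e by blast
    have r1: "\<And>i. i \<noteq> Suc r \<Longrightarrow> rowof S1 i = rowof T i" unfolding S1_def by (simp add: rowof_setrow)
    have r2: "row_start S1 (Suc r) = row_start T (Suc r)" "length (row_entries S1 (Suc r)) = length (row_entries T (Suc r))"
      unfolding S1_def using br by (simp_all add: rowof_setrow)
    show ?thesis
    proof (intro conjI allI impI)
      show "l \<le> Suc r" using IH by simp
    next
      fix i assume "i < l \<or> Suc r < i"
      then show "rowof S' i = rowof T i" using IH r1[of i] by auto
    next
      fix i assume il: "i \<noteq> l"
      show "row_start S' i = row_start T i" using IH il r1[of i] r2 by (cases "i = Suc r") auto
      show "length (row_entries S' i) = length (row_entries T i)" using IH il r1[of i] r2 by (cases "i = Suc r") auto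
    next
      assume "1 \<le> l"
      then show "rowof S' l = (row_start T l - 1, v # row_entries T l)" using IH r1[of l] by auto
    qed
  qed
qed

lemma first_greater_index_update:
  assumes "sorted R" "K < length R" "R ! K < (x::nat)"
  shows "Min {k. k < length (R[K := x]) \<and> R ! K < R[K := x] ! k} = K"
proof (rule Min_eqI)
  show "finite {k. k < length (R[K := x]) \<and> R ! K < R[K := x] ! k}" by simp
  show "K \<in> {k. k < length (R[K := x]) \<and> R ! K < R[K := x] ! k}" using assms by simp
  fix k assume "k \<in> {k. k < length (R[K := x]) \<and> R ! K < R[K := x] ! k}"
  hence k: "k < length R" "R ! K < R[K := x] ! k" by auto
  show "K \<le> k"
  proof (rule ccontr)
    assume "\<not> K \<le> k"
    hence "k < K" by simp
    hence "R ! k \<le> R ! K" using assms(1,2) by (simp add: sorted_iff_nth_mono)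
    thus False using k \<open>k < K\<close> by simp
  qed
qed

lemma ins_undo_bump:
  assumes "sorted R" "K < length R" "R ! K < x" "rowof S p = (b, R[K := x])" "1 \<le> p"
  shows "ins (R ! K) p S = ins x (Suc p) (setrow p (b, R) S)"
proof -
  have nle: "\<not> (\<forall>z\<in>set (R[K := x]). z \<le> R ! K)" using assms(2,3)
    by (metis le_antisym length_list_update less_imp_le less_irrefl nth_list_update_eq nth_mem)
  have m: "Min {k. k < length (R[K := x]) \<and> R ! K < R[K := x] ! k} = K" using first_greater_index_update[OF assms(1-3)] .
  have uu: "(R[K := x])[K := R ! K] = R" by simp
  have nth: "R[K := x] ! K = x" using assms(2) by simp
  show ?thesis using assms(2,4,5) nle m uu nth by (subst ins.simps) (auto simp: Let_def)
qed

lemma ins_revins_exit: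
  "rows_sorted S \<Longrightarrow> revins x r S = (S', 0, v) \<Longrightarrow> same_rows (ins v 1 S') (ins x (Suc r) S)"
proof (induction x r S arbitrary: S' v rule: revins.induct)
  case (1 x T)
  then show ?case by simp
next
  case (2 x r T)
  obtain b R where br: "rowof T (Suc r) = (b, R)" by fastforce
  have nT: "\<not> (\<forall>y\<in>set R. x \<le> y)"
  proof
    assume "\<forall>y\<in>set R. x \<le> y"
    thus False using "2.prems"(2) br by simp
  qed
  let ?K = "Max {k. k < length R \<and> R ! k < x}"
  note lk = last_smaller_index[OF nT]
  define S1 where "S1 = setrow (Suc r) (b, R[?K := x]) T"
  have e: "revins (R ! ?K) r S1 = (S', 0, v)" using "2.prems"(2) br nT unfolding S1_def by (auto simp: Let_def)
  have sR: "sorted R" using "2.prems"(1) br unfolding rows_sorted_def by (metis fst_conv le_add1 plus_1_eq_Suc snd_conv)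
  have sS1: "rows_sorted S1" unfolding S1_def by (rule rows_sorted_setrow[OF "2.prems"(1)]) (use sorted_update_last_smaller[OF sR lk] in auto)
  have IH: "same_rows (ins v 1 S') (ins (R ! ?K) (Suc r) S1)"
    using "2.IH"[OF br[symmetric] nT refl, folded S1_def] sS1 e by blast
  have "ins (R ! ?K) (Suc r) S1 = ins x (Suc (Suc r)) (setrow (Suc r) (b, R) S1)"
    by (rule ins_undo_bump[OF sR lk(1,2)]) (simp_all add: S1_def rowof_setrow)
  moreover have "same_rows (setrow (Suc r) (b, R) S1) T" unfolding S1_def by (rule same_rows_setrow_restore[OF br]) simp
  ultimately show ?case using IH same_rows_ins same_rows_trans by metis
qed

lemma ins_revins_land:
  "rows_sorted S \<Longrightarrow> revins x r S = (S', l, v) \<Longrightarrow> 1 \<le> l \<Longrightarrow>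
     same_rows (ins v (Suc l) (setrow l (rowof S l) S')) (ins x (Suc r) S)"
proof (induction x r S arbitrary: S' l v rule: revins.induct)
  case (1 x T)
  then show ?case by simp
next
  case (2 x r T)
  obtain b R where br: "rowof T (Suc r) = (b, R)" by fastforce
  show ?case
  proof (cases "\<forall>y\<in>set R. x \<le> y")
    case True
    then have e: "S' = setrow (Suc r) (b - 1, x # R) T" "l = Suc r" "v = x" using "2.prems" br by auto
    have "same_rows (setrow (Suc r) (rowof T (Suc r)) S') T" using e br by (simp add: same_rows_setrow_restore)
    then show ?thesis using e same_rows_ins by simp
  next
    case nT: False
    let ?K = "Max {k. k < length R \<and> R ! k < x}"
    note lk = last_smaller_index[OF nT]
    define S1 where "S1 = setrow (Suc r) (b, R[?K := x]) T"
    have e: "revins (R ! ?K) r S1 = (S', l, v)" using "2.prems"(2) br nT unfolding S1_def by (auto simp: Let_def)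
    have sR: "sorted R" using "2.prems"(1) br unfolding rows_sorted_def by (metis fst_conv le_add1 plus_1_eq_Suc snd_conv)
    have sS1: "rows_sorted S1" unfolding S1_def by (rule rows_sorted_setrow[OF "2.prems"(1)]) (use sorted_update_last_smaller[OF sR lk] in auto)
    have IH: "same_rows (ins v (Suc l) (setrow l (rowof S1 l) S')) (ins (R ! ?K) (Suc r) S1)"
      using "2.IH"[OF br[symmetric] nT refl, folded S1_def] sS1 e "2.prems"(3) by blast
    have "l \<le> r" using revins_rows[OF e] by simp
    hence rl: "rowof S1 l = rowof T l" unfolding S1_def by (simp add: rowof_setrow)
    have "ins (R ! ?K) (Suc r) S1 = ins x (Suc (Suc r)) (setrow (Suc r) (b, R) S1)"
      by (rule ins_undo_bump[OF sR lk(1,2)]) (simp_all add: S1_def rowof_setrow)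
    moreover have "same_rows (setrow (Suc r) (b, R) S1) T" unfolding S1_def by (rule same_rows_setrow_restore[OF br]) simp
    ultimately show ?thesis using IH rl same_rows_ins same_rows_trans by metis
  qed
qed

lemma ins_last_restores: "rowof T j = (b, R) \<Longrightarrow> R \<noteq> [] \<Longrightarrow> sorted R \<Longrightarrow> 1 \<le> j \<Longrightarrow>
    same_rows (ins (last R) j (setrow j (b, butlast R) T)) T"
proof -
  assume br: "rowof T j = (b, R)" and ne: "R \<noteq> []" and s: "sorted R" and j: "1 \<le> j"
  have r0: "rowof (setrow j (b, butlast R) T) j = (b, butlast R)" using j by (simp add: rowof_setrow)
  have "ins (last R) j (setrow j (b, butlast R) T) = setrow j (b, butlast R @ [last R]) (setrow j (b, butlast R) T)"
    using j r0 butlast_le_last[OF s ne] by (subst ins.simps) simp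
  also have "butlast R @ [last R] = R" using ne by simp
  finally show ?thesis using same_rows_setrow_restore[OF br j] by simp
qed

lemma ins_rev_corner_exit:
  assumes "rows_sorted T" "1 \<le> j" "rowof T j = (b, R)" "R \<noteq> []" "rev_corner T (cl, j) = (T', 0, k)"
  shows "same_rows (ins k 1 T') T"
proof -
  have "sorted (row_entries T j)" using assms(1,2) by (simp add: rows_sorted_def)
  hence sR: "sorted R" using assms(3) by simp
  have s0: "rows_sorted (setrow j (b, butlast R) T)" by (rule rows_sorted_setrow[OF assms(1,2) sorted_butlast[OF sR]])
  have "same_rows (ins k 1 T') (ins (last R) (Suc (j - 1)) (setrow j (b, butlast R) T))"
    using ins_revins_exit[OF s0] assms(5) rev_corner_unfold[OF assms(3)] by simp
  then show ?thesis using assms(2) ins_last_restores[OF assms(3,4) sR assms(2)] same_rows_trans by simp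
qed

lemma rev_corner_rows:
  assumes "1 \<le> j" "rowof T j = (b, R)" "R \<noteq> []" "rev_corner T (cl, j) = (T', l, v)"
  shows "l < j" "\<forall>i. i < l \<longrightarrow> rowof T' i = rowof T i" "\<forall>i. j < i \<longrightarrow> rowof T' i = rowof T i"
    "\<forall>i. i \<noteq> l \<longrightarrow> row_start T' i = row_start T i"
    "\<forall>i. i \<noteq> l \<longrightarrow> i \<noteq> j \<longrightarrow> length (row_entries T' i) = length (row_entries T i)"
    "l \<noteq> j \<Longrightarrow> row_entries T' j = butlast R"
    "1 \<le> l \<Longrightarrow> rowof T' l = (row_start T l - 1, v # row_entries T l)"
proof -
  let ?S0 = "setrow j (b, butlast R) T"
  have e: "revins (last R) (j - 1) ?S0 = (T', l, v)" using assms(4) rev_corner_unfold[OF assms(2)] by simp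
  note P = revins_rows[OF e]
  have r0: "\<And>i. rowof ?S0 i = (if i = j then (b, butlast R) else rowof T i)" using assms(1) by (simp add: rowof_setrow)
  show lj: "l < j" using P assms(1) by linarith
  show "\<forall>i. i < l \<longrightarrow> rowof T' i = rowof T i" using P r0 lj by auto
  show "\<forall>i. j < i \<longrightarrow> rowof T' i = rowof T i" using P r0 by auto
  show "\<forall>i. i \<noteq> l \<longrightarrow> row_start T' i = row_start T i" using P r0 assms(2) by auto
  show "\<forall>i. i \<noteq> l \<longrightarrow> i \<noteq> j \<longrightarrow> length (row_entries T' i) = length (row_entries T i)" using P r0 by auto
  show "l \<noteq> j \<Longrightarrow> row_entries T' j = butlast R" using P r0 assms(1) by auto
  show "1 \<le> l \<Longrightarrow> rowof T' l = (row_start T l - 1, v # row_entries T l)" using P r0 lj by auto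
qed

lemma rev_corner_row_end:
  assumes j: "1 \<le> j" and br: "rowof T j = (b, R)" and ne: "R \<noteq> []" and rc: "rev_corner T (cl, j) = (T', l, v)"
    and l: "1 \<le> l \<Longrightarrow> 1 \<le> row_start T l" and i: "1 \<le> i"
  shows "row_end T' i = row_end T i - (if i = j then 1 else 0)"
proof -
  note P = rev_corner_rows[OF j br ne rc]
  consider "i = l" | "i = j" | "i \<noteq> l" "i \<noteq> j" by blast
  then show ?thesis
  proof cases
    case 1 then show ?thesis using P(1,7) l i by simp
  next
    case 2
    then have "row_start T' j = b" "row_entries T' j = butlast R" using P(1,4,6) br by auto
    then show ?thesis using 2 br ne by (cases R) auto
  next
    case 3 then show ?thesis using P(4,5) by simp
  qed
qed

lemma ins_rev_corner_land:
  assumes "rows_sorted T" "1 \<le> j" "rowof T j = (b, R)" "R \<noteq> []" "rev_corner T (cl, j) = (T', l, v)" "1 \<le> l"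
  shows "same_rows (ins v (Suc l) (setrow l (rowof T l) T')) T"
proof -
  have "sorted (row_entries T j)" using assms(1,2) by (simp add: rows_sorted_def)
  hence sR: "sorted R" using assms(3) by simp
  have s0: "rows_sorted (setrow j (b, butlast R) T)" by (rule rows_sorted_setrow[OF assms(1,2) sorted_butlast[OF sR]])
  have e: "revins (last R) (j - 1) (setrow j (b, butlast R) T) = (T', l, v)" using assms(5) rev_corner_unfold[OF assms(3)] by simp
  have "l < j" using rev_corner_rows[OF assms(2-5)] by simp
  hence rl: "rowof (setrow j (b, butlast R) T) l = rowof T l" using assms(2) by (simp add: rowof_setrow)
  have "same_rows (ins v (Suc l) (setrow l (rowof T l) T')) (ins (last R) (Suc (j - 1)) (setrow j (b, butlast R) T))"
    using ins_revins_land[OF s0 e assms(6)] rl by simp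
  then show ?thesis using assms(2) ins_last_restores[OF assms(3,4) sR assms(2)] same_rows_trans by simp
qed

lemma carried_after_larger:
  assumes s: "rows_sorted S" and yx: "y < x"
  shows "1 \<le> i \<Longrightarrow> carried S x 1 i = Some a \<Longrightarrow>
    \<exists>b. carried (ins x 1 S) y 1 i = Some b \<and> b < a \<and> a \<in> set (row_entries (ins x 1 S) i)"
proof (induction i arbitrary: a rule: nat_induct_at_least)
  case base
  have "a = x" using base by simp
  moreover have "row_entries (ins x 1 S) 1 = fst (bump_row (row_entries S 1) x)" using rowof_ins[of 1 1 x S] by simp
  ultimately show ?case using yx in_bump_row[of x "row_entries S 1"] by simp
next
  case (Suc n)
  let ?S1 = "ins x 1 S"
  obtain a0 where a0: "carried S x 1 n = Some a0" "snd (bump_row (row_entries S n) a0) = Some a"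
    using Suc.prems Suc.hyps by (cases "carried S x 1 n") auto
  obtain b0 where b0: "carried ?S1 y 1 n = Some b0" "b0 < a0" "a0 \<in> set (row_entries ?S1 n)" using Suc.IH[OF a0(1)] by blast
  have rowS1: "row_entries ?S1 n = fst (bump_row (row_entries S n) a0)" using rowof_ins[of 1 n x S] Suc.hyps a0(1) by simp
  have sn: "sorted (row_entries S n)" using s Suc.hyps by (simp add: rows_sorted_def)
  have nle0: "\<not> (\<forall>z\<in>set (row_entries S n). z \<le> a0)"
  proof
    assume "\<forall>z\<in>set (row_entries S n). z \<le> a0"
    hence "bump_row (row_entries S n) a0 = (row_entries S n @ [a0], None)" by (rule bump_row_append)
    thus False using a0(2) by simp
  qed
  obtain R' where r0: "bump_row (row_entries S n) a0 = (R', Some a)" "least_greater (row_entries S n) a0 a"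
    using bump_row_replace[OF sn nle0] a0(2) by auto
  have sS1: "sorted (row_entries ?S1 n)" using rows_sorted_ins[OF s, of 1 x] Suc.hyps by (simp add: rows_sorted_def)
  have nle1: "\<not> (\<forall>z\<in>set (row_entries ?S1 n). z \<le> b0)" using b0(2,3) leD by blast
  obtain R'' b where r1: "bump_row (row_entries ?S1 n) b0 = (R'', Some b)" "least_greater (row_entries ?S1 n) b0 b"
    using bump_row_replace[OF sS1 nle1] by auto
  have "b \<le> a0" using r1(2) b0 unfolding least_greater_def by blast
  moreover have "a0 < a" using r0(2) unfolding least_greater_def by blast
  ultimately have ba: "b < a" by simp
  have cvb: "carried ?S1 y 1 (Suc n) = Some b" using b0(1) r1(1) Suc.hyps by simp
  have "row_entries ?S1 (Suc n) = fst (bump_row (row_entries S (Suc n)) a)" using rowof_ins[of 1 "Suc n" x S] Suc.prems by simp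
  hence "a \<in> set (row_entries ?S1 (Suc n))" using in_bump_row by simp
  then show ?case using cvb ba by simp
qed

lemma no_growth_after_larger:
  assumes s: "rows_sorted S" and yx: "y < x" and i: "1 \<le> i" and g: "carried S x 1 i = Some a"
  shows "\<not> (\<exists>b. carried (ins x 1 S) y 1 i = Some b \<and> (\<forall>z\<in>set (row_entries (ins x 1 S) i). z \<le> b))"
  using carried_after_larger[OF s yx i g] by force

lemma carried_rests_in_grown_row:
  assumes "same_rows (ins x 1 X) Y" "1 \<le> \<rho>" "length (row_entries Y \<rho>) = length (row_entries X \<rho>) + 1"
  shows "\<exists>a. carried X x 1 \<rho> = Some a \<and> (\<forall>z\<in>set (row_entries X \<rho>). z \<le> a)"
proof (rule ccontr)
  assume "\<not> ?thesis"
  then have "length (row_entries (ins x 1 X) \<rho>) = length (row_entries X \<rho>)"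
    using length_row_ext_ins[OF assms(2), of x X] by simp
  then show False using same_rowsD[OF assms(1), of \<rho>] assms(3) by simp
qed

text \<open>Inserting x into X ends by lengthening row \<rho>1, so it passes through row \<rho>0. If y < x, the
  subsequent insertion of y carries a smaller value through that row, which cannot come to rest there.\<close>

lemma bumped_antimono_core:
  assumes sX: "rows_sorted X" and teqY: "same_rows (ins x 1 X) Y" and te0: "same_rows (ins y 1 Y) Z"
    and r0: "1 \<le> \<rho>0" and r01: "\<rho>0 \<le> \<rho>1"
    and l1: "\<forall>j\<ge>1. length (row_entries Y j) = length (row_entries X j) + (if j = \<rho>1 then 1 else 0)"
    and l0: "\<forall>j\<ge>1. length (row_entries Z j) = length (row_entries Y j) + (if j = \<rho>0 then 1 else 0)"
  shows "x \<le> y"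
proof (rule ccontr)
  assume "\<not> x \<le> y"
  hence yx: "y < x" by simp
  have r1: "1 \<le> \<rho>1" using r0 r01 by simp
  have gx: "\<exists>a0. carried X x 1 \<rho>1 = Some a0 \<and> (\<forall>z\<in>set (row_entries X \<rho>1). z \<le> a0)"
    by (rule carried_rests_in_grown_row[OF teqY r1]) (use l1 r1 in simp)
  have gy: "\<exists>b. carried Y y 1 \<rho>0 = Some b \<and> (\<forall>z\<in>set (row_entries Y \<rho>0). z \<le> b)"
    by (rule carried_rests_in_grown_row[OF te0 r0]) (use l0 r0 in simp)
  have cvY: "carried Y y 1 \<rho>0 = carried (ins x 1 X) y 1 \<rho>0" using carried_same_rows[OF same_rows_sym[OF teqY]] by simp
  have rY: "row_entries Y \<rho>0 = row_entries (ins x 1 X) \<rho>0" using same_rowsD[OF teqY, of \<rho>0] by simp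
  obtain a0 where ca0: "carried X x 1 \<rho>1 = Some a0" using gx by blast
  obtain a1 where ca1: "carried X x 1 \<rho>0 = Some a1" using carried_before[OF ca0 r0 r01] by blast
  have ng: "\<not> (\<exists>b. carried (ins x 1 X) y 1 \<rho>0 = Some b \<and> (\<forall>z\<in>set (row_entries (ins x 1 X) \<rho>0). z \<le> b))"
    by (rule no_growth_after_larger[OF sX yx r0 ca1])
  have "\<exists>b. carried (ins x 1 X) y 1 \<rho>0 = Some b \<and> (\<forall>z\<in>set (row_entries (ins x 1 X) \<rho>0). z \<le> b)"
    using gy unfolding cvY rY .
  then show False using ng by blast
qed

text \<open>Like row_inputs P 1 w, but with an additional 0 entering row r ahead of all other values.\<close>

primrec row_inputs_zero :: "tab \<Rightarrow> nat \<Rightarrow> nat list \<Rightarrow> nat \<Rightarrow> nat list" where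
  "row_inputs_zero P r w 0 = []"
| "row_inputs_zero P r w (Suc j) = (if Suc j < r then row_inputs P 1 w (Suc j) else if Suc j = r then 0 # row_inputs P 1 w (Suc j)
     else snd (bump_row_list (row_entries P j) (row_inputs_zero P r w j)))"

lemma one_more_row_inputs_zero:
  assumes sP: "rows_sorted P" and r1: "1 \<le> r" and ws: "sorted w" and ri: "r \<le> i"
  shows "one_more (row_inputs P 1 w i) (row_inputs_zero P r w i) \<and>
    length (fst (bump_row_list (row_entries P i) (row_inputs P 1 w i)))
      \<le> length (fst (bump_row_list (row_entries P i) (row_inputs_zero P r w i)))"
  using ri
proof (induction i rule: dec_induct)
  case base
  have sPr: "sorted (row_entries P r)" using sP r1 by (simp add: rows_sorted_def)
  have "row_inputs_zero P r w r = [] @ 0 # row_inputs P 1 w r" using r1 by (cases r) auto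
  then have "one_more (row_inputs P 1 w r) (row_inputs_zero P r w r)"
    unfolding one_more_def using sorted_row_inputs[OF sP ws r1] by (metis append_Nil bot_nat_0.extremum sorted_simps(2))
  then show ?case using one_more_bump_row_list[OF _ sPr] by blast
next
  case (step n)
  have sPn: "sorted (row_entries P n)" "sorted (row_entries P (Suc n))"
    using sP step.hyps r1 by (simp_all add: rows_sorted_def)
  have "one_more (row_inputs P 1 w (Suc n)) (row_inputs_zero P r w (Suc n))"
    using one_more_bump_row_list[OF conjunct1[OF step.IH] sPn(1)] step.hyps r1 by simp
  then show ?case using one_more_bump_row_list[OF _ sPn(2)] by simp
qed

lemma row_inputs_ins_above:
  assumes r1: "1 \<le> r" and hr: "row_entries P r = e # R0" and sR: "sorted (e # R0)" and e0: "0 < e"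
  defines "V \<equiv> setrow r (row_start P r + 1, R0) P"
  shows "\<And>i. 1 \<le> i \<Longrightarrow> i \<le> r \<Longrightarrow> rowof (ins e (Suc r) V) i = rowof V i"
    "\<And>i. 1 \<le> i \<Longrightarrow> i \<le> r \<Longrightarrow> row_inputs (ins e (Suc r) V) 1 w i = row_inputs P 1 w i"
    "\<And>i. Suc r \<le> i \<Longrightarrow> row_inputs V (Suc r) [e] i @ row_inputs (ins e (Suc r) V) 1 w i = row_inputs_zero P r w i"
proof -
  let ?S = "ins e (Suc r) V"
  let ?A = "row_inputs P 1 w" and ?E = "row_inputs V (Suc r) [e]" and ?W = "row_inputs ?S 1 w"
  have rV: "\<And>i. rowof V i = (if i = r then (row_start P r + 1, R0) else rowof P i)"
    unfolding V_def using r1 by (simp add: rowof_setrow)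
  have rowS: "\<And>i. 1 \<le> i \<Longrightarrow> rowof ?S i = (row_start V i, fst (bump_row_list (row_entries V i) (?E i)))"
    using rowof_ins_list[of "Suc r" _ "[e]" V] by (simp add: ins_list_single)
  have "\<And>i. i \<le> r \<Longrightarrow> ?E i = []" by (case_tac i) auto
  then show low: "\<And>i. 1 \<le> i \<Longrightarrow> i \<le> r \<Longrightarrow> rowof ?S i = rowof V i" using rowS by simp
  show W: "\<And>i. 1 \<le> i \<Longrightarrow> i \<le> r \<Longrightarrow> ?W i = ?A i"
  proof -
    fix i :: nat assume "1 \<le> i" "i \<le> r"
    then show "?W i = ?A i"
    proof (induction i rule: nat_induct_at_least)
      case base then show ?case by simp
    next
      case (Suc n)
      have "row_entries ?S n = row_entries P n" using low[of n] rV[of n] Suc by simp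
      then show ?case using Suc by simp
    qed
  qed
  fix i :: nat assume "Suc r \<le> i"
  then show "?E i @ ?W i = row_inputs_zero P r w i"
  proof (induction i rule: dec_induct)
    case base
    have "?W (Suc r) = snd (bump_row_list (row_entries ?S r) (?W r))" using r1 by simp
    also have "row_entries ?S r = R0" using low[OF r1] rV[of r] by simp
    finally have "?W (Suc r) = snd (bump_row_list R0 (?A r))" using W[OF r1] by simp
    moreover have "row_inputs_zero P r w r = 0 # ?A r" using r1 by (cases r) auto
    ultimately show ?case using hr bump_row_list_zero[OF sR e0] by simp
  next
    case (step n)
    have n1: "1 \<le> n" "n \<noteq> r" using step.hyps r1 by auto
    have "?E (Suc n) @ ?W (Suc n) = snd (bump_row_list (row_entries V n) (?E n)) @ snd (bump_row_list (row_entries ?S n) (?W n))"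
      using step.hyps n1 by simp
    also have "row_entries ?S n = fst (bump_row_list (row_entries V n) (?E n))" using rowS[OF n1(1)] by simp
    also have "snd (bump_row_list (row_entries V n) (?E n)) @ snd (bump_row_list (fst (bump_row_list (row_entries V n) (?E n))) (?W n))
        = snd (bump_row_list (row_entries V n) (?E n @ ?W n))"
      by (simp add: bump_row_list_append split: prod.splits)
    also have "\<dots> = row_inputs_zero P r w (Suc n)" using step.IH step.hyps rV[of n] n1 by simp
    finally show ?case .
  qed
qed

text \<open>Inserting 0 into row r of P replaces its first entry e, which moves on to row r + 1, and the 0
  then stays inert at the front of row r. Apart from that inert cell this yields
  ins e (Suc r) (setrow r (row_start P r + 1, R0) P), so inserting w there amounts to inserting w
  into P with an extra 0 entering row r; and an extra value can only lengthen rows.\<close>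

lemma row_end_ins_list_le:
  assumes sP: "rows_sorted P" and r1: "1 \<le> r" and hr: "row_entries P r = e # R0" and e0: "0 < e" and ws: "sorted w"
  shows "\<forall>j\<ge>1. row_end (ins_list w 1 P) j \<le> row_end (ins_list w 1 (ins e (Suc r) (setrow r (row_start P r + 1, R0) P))) j"
proof (intro allI impI)
  fix j :: nat assume j1: "1 \<le> j"
  define V where "V = setrow r (row_start P r + 1, R0) P"
  define S where "S = ins e (Suc r) V"
  have sR: "sorted (e # R0)" using sP r1 hr by (metis rows_sorted_def)
  note above = row_inputs_ins_above[OF r1 hr sR e0, folded V_def S_def]
  note more = one_more_row_inputs_zero[OF sP r1 ws]
  have rV: "\<And>i. rowof V i = (if i = r then (row_start P r + 1, R0) else rowof P i)"
    unfolding V_def using r1 by (simp add: rowof_setrow)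
  have rowP: "rowof (ins_list w 1 P) j = (row_start P j, fst (bump_row_list (row_entries P j) (row_inputs P 1 w j)))"
    using rowof_ins_list j1 by simp
  have rowS: "rowof (ins_list w 1 S) j = (row_start S j, fst (bump_row_list (row_entries S j) (row_inputs S 1 w j)))"
    using rowof_ins_list j1 by simp
  consider "j < r" | "j = r" | "Suc r \<le> j" by linarith
  then show "row_end (ins_list w 1 P) j \<le> row_end (ins_list w 1 S) j"
  proof cases
    case 1
    then show ?thesis using rowP rowS above(1,2)[OF j1] rV[of j] by simp
  next
    case 2
    have "row_entries S r = R0" "row_start S r = row_start P r + 1" using above(1)[OF r1] rV[of r] by auto
    moreover have "row_inputs_zero P r w r = 0 # row_inputs P 1 w r" using r1 by (cases r) auto
    ultimately show ?thesis using rowP rowS above(2)[OF r1] more[of r] hr bump_row_list_zero[OF sR e0] 2 by simp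
  next
    case 3
    have "row_start S j = row_start P j" using rowof_ins_list[of "Suc r" j "[e]" V] j1 rV[of j] 3
      by (simp add: S_def ins_list_single)
    moreover have "row_entries S j = fst (bump_row_list (row_entries V j) (row_inputs V (Suc r) [e] j))"
      using rowof_ins_list[of "Suc r" j "[e]" V] j1 by (simp add: S_def ins_list_single)
    then have "row_entries (ins_list w 1 S) j = fst (bump_row_list (row_entries P j) (row_inputs_zero P r w j))"
      using rowS above(3)[OF 3] rV[of j] 3 by (simp add: fst_bump_row_list_append)
    ultimately show ?thesis using rowP rowS more[of j] 3 by simp
  qed
qed

lemma wf_tab_bounds_antimono:
  assumes "wf_tab S" "1 \<le> j" "j \<le> j'"
  shows "row_start S j' \<le> row_start S j \<and> row_end S j' \<le> row_end S j"
  using assms(3)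
proof (induction j' rule: dec_induct)
  case base then show ?case by simp
next
  case (step n)
  have "1 \<le> n" using assms(2) step.hyps(1) by simp
  then show ?case using wf_tabD[OF assms(1), of n] step.IH by linarith
qed

lemma wf_tab_col_strict_far:
  assumes g: "wf_tab S" and j: "1 \<le> j"
  shows "row_start S j < i \<Longrightarrow> i \<le> row_end S j \<Longrightarrow> row_start S (j + d) < i \<Longrightarrow> i \<le> row_end S (j + d) \<Longrightarrow> 0 < d \<Longrightarrow>
     row_entries S j ! (i - row_start S j - 1) < row_entries S (j + d) ! (i - row_start S (j + d) - 1)"
proof (induction d)
  case 0 then show ?case by simp
next
  case (Suc d)
  have m1: "row_start S (Suc j) \<le> row_start S j" "row_end S (j + Suc d) \<le> row_end S (Suc j)"
    using wf_tab_bounds_antimono[OF g j, of "Suc j"] wf_tab_bounds_antimono[OF g, of "Suc j" "j + Suc d"] by auto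
  have in1: "row_start S (Suc j) < i" "i \<le> row_end S (Suc j)" using Suc.prems m1 by linarith+
  have step1: "row_entries S j ! (i - row_start S j - 1) < row_entries S (Suc j) ! (i - row_start S (Suc j) - 1)"
    using spec[OF wf_tabD(5)[OF g j, unfolded col_strict_def], of i] Suc.prems(1,2) in1 by simp
  show ?case
  proof (cases "d = 0")
    case True then show ?thesis using step1 by simp
  next
    case False
    have m2: "row_start S (j + d) \<le> row_start S (Suc j)" "row_end S (j + Suc d) \<le> row_end S (j + d)"
      using wf_tab_bounds_antimono[OF g, of "Suc j" "j + d"] wf_tab_bounds_antimono[OF g, of "j + d" "j + Suc d"] False by auto
    have in2: "row_start S (j + d) < i" "i \<le> row_end S (j + d)"
    proof -
      have "row_start S (j + Suc d) \<le> row_start S (j + d)" using wf_tab_bounds_antimono[OF g, of "j + d" "j + Suc d"] j by simp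
      show "i \<le> row_end S (j + d)" using Suc.prems(4) m2 by linarith
      show "row_start S (j + d) < i" using m2(1) in1(1) by linarith
    qed
    have IH: "row_entries S j ! (i - row_start S j - 1) < row_entries S (j + d) ! (i - row_start S (j + d) - 1)"
      using Suc.IH Suc.prems(1,2) in2 False by simp
    have jd: "1 \<le> j + d" using j by simp
    have "row_entries S (j + d) ! (i - row_start S (j + d) - 1) < row_entries S (Suc (j + d)) ! (i - row_start S (Suc (j + d)) - 1)"
      using spec[OF wf_tabD(5)[OF g jd, unfolded col_strict_def], of i] in2 Suc.prems(3,4) by simp
    then show ?thesis using IH by simp
  qed
qed

lemma wf_tab_is_ssyt: "wf_tab S \<Longrightarrow> is_ssyt S"
  unfolding is_ssyt_def
proof (intro conjI allI impI)
  assume g: "wf_tab S"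
  fix c a assume "cellmap S c = Some a"
  then obtain i j where c: "c = (i, j)" "1 \<le> j" "row_start S j < i" "i \<le> row_end S j" "a = row_entries S j ! (i - row_start S j - 1)"
    by (cases c) (auto simp: cellmap_eq split: if_splits)
  have "i - row_start S j - 1 < length (row_entries S j)" using c by linarith
  then show "0 < a" using wf_tabD(2)[OF g c(2)] c(5) by simp
next
  assume g: "wf_tab S"
  fix i i' j a a' assume ii: "i < i'" and c1: "cellmap S (i, j) = Some a" and c2: "cellmap S (i', j) = Some a'"
  have h1: "1 \<le> j" "row_start S j < i" "i \<le> row_end S j" "a = row_entries S j ! (i - row_start S j - 1)" using c1 by (auto simp: cellmap_eq split: if_splits)
  have h2: "row_start S j < i'" "i' \<le> row_end S j" "a' = row_entries S j ! (i' - row_start S j - 1)" using c2 by (auto simp: cellmap_eq split: if_splits)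
  have "i' - row_start S j - 1 < length (row_entries S j)" using h2 by linarith
  moreover have "i - row_start S j - 1 \<le> i' - row_start S j - 1" using ii by linarith
  ultimately show "a \<le> a'" using wf_tabD(1)[OF g h1(1)] h1(4) h2(3) by (simp add: sorted_iff_nth_mono)
next
  assume g: "wf_tab S"
  fix i j j' a a' assume jj: "j < j'" and c1: "cellmap S (i, j) = Some a" and c2: "cellmap S (i, j') = Some a'"
  have h1: "1 \<le> j" "row_start S j < i" "i \<le> row_end S j" "a = row_entries S j ! (i - row_start S j - 1)" using c1 by (auto simp: cellmap_eq split: if_splits)
  have h2: "row_start S j' < i" "i \<le> row_end S j'" "a' = row_entries S j' ! (i - row_start S j' - 1)" using c2 by (auto simp: cellmap_eq split: if_splits)
  obtain d where d: "j' = j + d" "0 < d" using jj by (metis less_imp_add_positive)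
  show "a < a'" using wf_tab_col_strict_far[OF g h1(1) h1(2,3), of d] h2 d h1(4) by simp
qed

lemma pt_Suc_le: "is_partition l \<Longrightarrow> 1 \<le> j \<Longrightarrow> pt l (Suc j) \<le> pt l j"
  unfolding is_partition_def pt_def
  by (auto simp: sorted_wrt_iff_nth_less)

lemma wf_tab_if_ssyt_of_shape:
  assumes sh: "ssyt_of_shape S lam mu" and pl: "is_partition lam" and pm: "is_partition mu"
  shows "wf_tab S"
  unfolding wf_tab_def
proof (intro allI impI conjI)
  have eqs: "\<And>j. 1 \<le> j \<Longrightarrow> row_start S j = pt mu j \<and> row_end S j = pt lam j" using sh unfolding ssyt_of_shape_def by auto
  have ss: "is_ssyt S" using sh unfolding ssyt_of_shape_def by auto
  fix j :: nat assume j: "1 \<le> j"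
  have cm: "\<And>p. p < length (row_entries S j) \<Longrightarrow> cellmap S (row_start S j + p + 1, j) = Some (row_entries S j ! p)"
    using j by (simp add: cellmap_eq)
  show "sorted (row_entries S j)"
    unfolding sorted_iff_nth_mono
  proof (intro allI impI)
    fix p p' assume pp: "p \<le> p'" "p' < length (row_entries S j)"
    show "row_entries S j ! p \<le> row_entries S j ! p'"
    proof (cases "p = p'")
      case True then show ?thesis by simp
    next
      case False
      hence lt: "row_start S j + p + 1 < row_start S j + p' + 1" using pp by simp
      have c1: "cellmap S (row_start S j + p + 1, j) = Some (row_entries S j ! p)" using cm[of p] pp by simp
      have c2: "cellmap S (row_start S j + p' + 1, j) = Some (row_entries S j ! p')" using cm[of p'] pp by simp
      show ?thesis using ss[unfolded is_ssyt_def] c1 c2 lt by blast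
    qed
  qed
  show "\<forall>y\<in>set (row_entries S j). 0 < y"
  proof
    fix y assume "y \<in> set (row_entries S j)"
    then obtain p where "p < length (row_entries S j)" "row_entries S j ! p = y" by (auto simp: in_set_conv_nth)
    then show "0 < y" using ss cm[of p] unfolding is_ssyt_def by auto
  qed
  show "row_start S (Suc j) \<le> row_start S j" using eqs[of j] eqs[of "Suc j"] pt_Suc_le[OF pm j] j by simp
  show "row_end S (Suc j) \<le> row_end S j" using eqs[of j] eqs[of "Suc j"] pt_Suc_le[OF pl j] j by simp
  show "col_strict (row_start S j) (row_entries S j) (row_start S (Suc j)) (row_entries S (Suc j))"
    unfolding col_strict_def
  proof (intro allI impI)
    fix c assume a: "row_start S j < c" "c \<le> row_start S j + length (row_entries S j)" "row_start S (Suc j) < c" "c \<le> row_start S (Suc j) + length (row_entries S (Suc j))"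
    have "cellmap S (c, j) = Some (row_entries S j ! (c - row_start S j - 1))" using a j by (simp add: cellmap_eq)
    moreover have "cellmap S (c, Suc j) = Some (row_entries S (Suc j) ! (c - row_start S (Suc j) - 1))" using a j by (simp add: cellmap_eq)
    ultimately show "row_entries S j ! (c - row_start S j - 1) < row_entries S (Suc j) ! (c - row_start S (Suc j) - 1)"
      using ss unfolding is_ssyt_def by blast
  qed
qed

lemma antimono_from:
  fixes f :: "nat \<Rightarrow> nat"
  assumes dec: "\<And>j. 1 \<le> j \<Longrightarrow> f (Suc j) \<le> f j" and a1: "1 \<le> a" and ab: "a \<le> b"
  shows "f b \<le> f a"
  using ab
proof (induction b rule: dec_induct)
  case base then show ?case by simp
next
  case (step n)
  have "1 \<le> n" using a1 step.hyps(1) by simp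
  then show ?case using dec[of n] step.IH by simp
qed

lemma partition_of_antimono:
  fixes f :: "nat \<Rightarrow> nat"
  assumes dec: "\<And>j. 1 \<le> j \<Longrightarrow> f (Suc j) \<le> f j" and z: "\<And>j. N < j \<Longrightarrow> f j = 0"
  shows "\<exists>L. is_partition L \<and> (\<forall>j\<ge>1. pt L j = f j)"
proof -
  define K where "K = (LEAST k. f (Suc k) = 0)"
  have ex: "f (Suc N) = 0" using z by simp
  have fK: "f (Suc K) = 0" unfolding K_def by (rule LeastI[of _ N]) (rule ex)
  have posK: "\<And>j. 1 \<le> j \<Longrightarrow> j \<le> K \<Longrightarrow> 0 < f j"
  proof -
    fix j :: nat assume j: "1 \<le> j" "j \<le> K"
    have "f (Suc (j - 1)) \<noteq> 0"
    proof
      assume "f (Suc (j - 1)) = 0"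
      hence "K \<le> j - 1" unfolding K_def by (rule Least_le)
      thus False using j by simp
    qed
    thus "0 < f j" using j by simp
  qed
  have zK: "\<And>j. K < j \<Longrightarrow> f j = 0"
  proof -
    fix j :: nat assume "K < j"
    hence "f j \<le> f (Suc K)" using antimono_from[of f, OF dec, of "Suc K" j] by simp
    thus "f j = 0" using fK by simp
  qed
  define L where "L = map f [1..<Suc K]"
  have lenL: "length L = K" unfolding L_def by simp
  have nthL: "\<And>p. p < K \<Longrightarrow> L ! p = f (Suc p)" unfolding L_def by (simp del: upt_Suc)
  have ptL: "\<forall>j\<ge>1. pt L j = f j"
  proof (intro allI impI)
    fix j :: nat assume j: "1 \<le> j"
    show "pt L j = f j"
    proof (cases "j \<le> K")
      case True
      then show ?thesis using nthL[of "j - 1"] j lenL by (simp add: pt_def)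
    next
      case False
      then show ?thesis using zK[of j] lenL by (simp add: pt_def)
    qed
  qed
  have pos: "\<forall>x\<in>set L. 0 < x"
  proof
    fix x assume "x \<in> set L"
    then obtain p where p: "p < K" "L ! p = x" using lenL by (auto simp: in_set_conv_nth)
    thus "0 < x" using nthL[of p] posK[of "Suc p"] by simp
  qed
  have dec_L: "sorted_wrt (\<ge>) L"
    unfolding sorted_wrt_iff_nth_less
  proof (intro allI impI)
    fix a b assume ab: "a < b" "b < length L"
    have "f (Suc b) \<le> f (Suc a)" using antimono_from[of f, OF dec, of "Suc a" "Suc b"] ab by simp
    then show "L ! a \<ge> L ! b" using nthL[of a] nthL[of b] ab lenL by simp
  qed
  show ?thesis using pos dec_L ptL unfolding is_partition_def by blast
qed

lemma diagram_mono: "(\<And>j. 1 \<le> j \<Longrightarrow> pt a j \<le> pt b j) \<Longrightarrow> diagram a \<subseteq> diagram b"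
  unfolding diagram_def by force

lemma diagram_eq: "(\<And>j. 1 \<le> j \<Longrightarrow> pt a j = pt b j) \<Longrightarrow> diagram a = diagram b"
  unfolding diagram_def by force

lemma pt_mono_diagram: "diagram a \<subseteq> diagram b \<Longrightarrow> 1 \<le> j \<Longrightarrow> pt a j \<le> pt b j"
proof -
  assume s: "diagram a \<subseteq> diagram b" and j: "1 \<le> j"
  show "pt a j \<le> pt b j"
  proof (cases "pt a j = 0")
    case True then show ?thesis by simp
  next
    case False
    hence "(pt a j, j) \<in> diagram a" using j by (simp add: diagram_def)
    hence "(pt a j, j) \<in> diagram b" using s by blast
    then show ?thesis by (simp add: diagram_def)
  qed
qed

lemma pt_antimono: "is_partition l \<Longrightarrow> 1 \<le> a \<Longrightarrow> a \<le> b \<Longrightarrow> pt l b \<le> pt l a"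
  using antimono_from[of "pt l", OF pt_Suc_le] by blast

lemma finite_diagram: "finite (diagram l)"
proof -
  have "diagram l \<subseteq> {..sum_list l} \<times> {..length l}"
  proof
    fix c assume "c \<in> diagram l"
    then obtain i j where c: "c = (i, j)" "1 \<le> j" "1 \<le> i" "i \<le> pt l j" by (auto simp: diagram_def)
    have jl: "j \<le> length l" using c by (cases "j \<le> length l") (auto simp: pt_def)
    have "l ! (j - 1) \<le> sum_list l" using jl c(2) by (simp add: elem_le_sum_list)
    hence "i \<le> sum_list l" using c jl by (simp add: pt_def)
    then show "c \<in> {..sum_list l} \<times> {..length l}" using c jl by simp
  qed
  then show ?thesis by (rule finite_subset) simp
qed

lemma shape_of_wf_tab:
  assumes g: "wf_tab D"
  shows "\<exists>lam' mu'. is_partition lam' \<and> is_partition mu' \<and> ssyt_of_shape D lam' mu' \<and>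
     (\<forall>j\<ge>1. pt lam' j = row_end D j) \<and> (\<forall>j\<ge>1. pt mu' j = row_start D j)"
proof -
  have z1: "\<And>j. length D < j \<Longrightarrow> row_end D j = 0" by (simp add: rowof_beyond)
  have z2: "\<And>j. length D < j \<Longrightarrow> row_start D j = 0" by (simp add: rowof_beyond)
  obtain lam' where l: "is_partition lam'" "\<forall>j\<ge>1. pt lam' j = row_end D j"
    using partition_of_antimono[of "row_end D" "length D"] wf_tabD(4)[OF g] z1 by blast
  obtain mu' where m: "is_partition mu'" "\<forall>j\<ge>1. pt mu' j = row_start D j"
    using partition_of_antimono[of "row_start D" "length D"] wf_tabD(3)[OF g] z2 by blast
  have "diagram mu' \<subseteq> diagram lam'" by (rule diagram_mono) (use l m in simp)
  hence "ssyt_of_shape D lam' mu'" using l m wf_tab_is_ssyt[OF g] unfolding ssyt_of_shape_def by simp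
  then show ?thesis using l m by blast
qed

lemma hstrip_between:
  assumes "hstrip lamp lam" "diagram lam \<subseteq> diagram lam'" "diagram lam' \<subseteq> diagram lamp"
  shows "hstrip lam' lam"
  using assms unfolding hstrip_def by blast

lemma vstrip_remove_cell:
  assumes vs: "vstrip mu mum" and r1: "1 \<le> r" and nr: "\<forall>d \<in> diagram mu - diagram mum. snd d \<noteq> r"
    and pm: "\<forall>j\<ge>1. pt mu' j = pt mum j - (if j = r then 1 else 0)"
  shows "vstrip mu mu'"
proof -
  have sub1: "diagram mum \<subseteq> diagram mu" using vs unfolding vstrip_def by blast
  have sub2: "diagram mu' \<subseteq> diagram mum" by (rule diagram_mono) (use pm in simp)
  have murm: "pt mu r \<le> pt mum r"
  proof (rule ccontr)
    assume "\<not> pt mu r \<le> pt mum r"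
    hence "(pt mu r, r) \<in> diagram mu - diagram mum" using r1 by (auto simp: diagram_def)
    hence "snd (pt mu r, r) \<noteq> r" using nr by blast
    thus False by simp
  qed
  have cls: "\<And>c. c \<in> diagram mu - diagram mu' \<Longrightarrow> (snd c \<noteq> r \<and> c \<in> diagram mu - diagram mum) \<or> (c = (pt mum r, r))"
  proof -
    fix c assume c: "c \<in> diagram mu - diagram mu'"
    obtain i j where ij: "c = (i, j)" by fastforce
    have h: "1 \<le> j" "1 \<le> i" "i \<le> pt mu j" "\<not> i \<le> pt mu' j" using c ij by (auto simp: diagram_def)
    show "(snd c \<noteq> r \<and> c \<in> diagram mu - diagram mum) \<or> (c = (pt mum r, r))"
    proof (cases "j = r")
      case True
      have "pt mum r - 1 < i" using h pm True by simp
      moreover have "i \<le> pt mum r" using h murm True by simp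
      ultimately have "i = pt mum r" by linarith
      then show ?thesis using ij True by simp
    next
      case False
      hence "\<not> i \<le> pt mum j" using h pm by simp
      then show ?thesis using False ij h c by (auto simp: diagram_def)
    qed
  qed
  show ?thesis unfolding vstrip_def
  proof (intro conjI ballI impI)
    show "diagram mu' \<subseteq> diagram mu" using sub1 sub2 by blast
  next
    fix c d assume c: "c \<in> diagram mu - diagram mu'" and d: "d \<in> diagram mu - diagram mu'" and cd: "snd c = snd d"
    from cls[OF c] cls[OF d] cd show "c = d" using vs unfolding vstrip_def by auto
  qed
qed

context
  fixes lamp lam :: "nat list"
  assumes hs: "hstrip lamp lam" and plamp: "is_partition lamp" and plam: "is_partition lam"
begin

definition strip where "strip = diagram lamp - diagram lam"

lemma finite_strip: "finite strip" unfolding strip_def using finite_diagram by simp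

lemma in_strip: "(c, j) \<in> strip \<longleftrightarrow> 1 \<le> j \<and> pt lam j < c \<and> c \<le> pt lamp j"
  unfolding strip_def diagram_def by auto

lemma strip_col_unique: "a \<in> strip \<Longrightarrow> b \<in> strip \<Longrightarrow> fst a = fst b \<Longrightarrow> a = b"
  using hs unfolding hstrip_def strip_def by blast

lemma strip_rows_antimono:
  assumes "(a1, r1) \<in> strip" "(a2, r2) \<in> strip" "a1 < a2"
  shows "r2 \<le> r1"
proof (rule ccontr)
  assume "\<not> r2 \<le> r1"
  hence lt: "r1 < r2" by simp
  have h1: "1 \<le> r1" "pt lam r1 < a1" "a1 \<le> pt lamp r1" using assms(1) in_strip by auto
  have h2: "1 \<le> r2" "pt lam r2 < a2" "a2 \<le> pt lamp r2" using assms(2) in_strip by auto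
  have "pt lam r2 \<le> pt lam r1" using pt_antimono[OF plam h1(1)] lt by simp
  hence "(a1, r2) \<in> strip" using in_strip h1 h2 assms(3) by auto
  then show False using strip_col_unique[OF assms(1)] lt by fastforce
qed

definition strip_list where "strip_list = strip_cells lamp lam"

lemma strip_list_eq: "strip_list = rev (sorted_list_of_set strip)" unfolding strip_list_def strip_cells_def strip_def by simp

lemma set_strip_list: "set strip_list = strip" using strip_list_eq finite_strip by simp

lemma distinct_strip_list: "distinct strip_list" using strip_list_eq by simp

lemma strip_list_dec: "a < b \<Longrightarrow> b < length strip_list \<Longrightarrow> strip_list ! b < strip_list ! a"
proof -
  assume ab: "a < b" "b < length strip_list"
  let ?L = "sorted_list_of_set strip"
  have len: "length strip_list = length ?L" using strip_list_eq by simp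
  have "strip_list ! a = ?L ! (length ?L - Suc a)" "strip_list ! b = ?L ! (length ?L - Suc b)"
    using ab len strip_list_eq by (simp_all add: rev_nth)
  moreover have "sorted_wrt (<) ?L" by simp
  ultimately show "strip_list ! b < strip_list ! a" using ab len sorted_wrt_nth_less[of "(<)" ?L "length ?L - Suc b" "length ?L - Suc a"] by simp
qed

lemma strip_list_in: "i < length strip_list \<Longrightarrow> strip_list ! i \<in> strip" using set_strip_list nth_mem by blast

lemma strip_list_col_dec: "a < b \<Longrightarrow> b < length strip_list \<Longrightarrow> fst (strip_list ! b) < fst (strip_list ! a)"
proof -
  assume ab: "a < b" "b < length strip_list"
  have lt: "strip_list ! b < strip_list ! a" using strip_list_dec[OF ab] .
  have ne: "strip_list ! b \<noteq> strip_list ! a" using lt by simp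
  have "fst (strip_list ! b) \<noteq> fst (strip_list ! a)" using strip_col_unique[OF strip_list_in[OF ab(2)] strip_list_in[of a]] ab ne by fastforce
  moreover have "fst (strip_list ! b) \<le> fst (strip_list ! a)" using lt by (cases "strip_list ! b"; cases "strip_list ! a") auto
  ultimately show ?thesis by simp
qed

lemma strip_list_row_mono: "a < b \<Longrightarrow> b < length strip_list \<Longrightarrow> snd (strip_list ! a) \<le> snd (strip_list ! b)"
  using strip_rows_antimono[of "fst (strip_list ! b)" "snd (strip_list ! b)" "fst (strip_list ! a)" "snd (strip_list ! a)"] strip_list_in strip_list_col_dec by force

lemma strip_cell_facts:
  assumes i: "i < length strip_list" and ci: "strip_list ! i = (col, \<rho>)"
  shows "1 \<le> \<rho>" "pt lam \<rho> < col" "col \<le> pt lamp \<rho>" "pt lamp (Suc \<rho>) < col"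
proof -
  have inS: "(col, \<rho>) \<in> strip" using strip_list_in[OF i] ci by simp
  show r1: "1 \<le> \<rho>" and c1: "pt lam \<rho> < col" and c2: "col \<le> pt lamp \<rho>" using inS in_strip by auto
  show "pt lamp (Suc \<rho>) < col"
  proof (rule ccontr)
    assume "\<not> pt lamp (Suc \<rho>) < col"
    hence "col \<le> pt lamp (Suc \<rho>)" by simp
    moreover have "pt lam (Suc \<rho>) \<le> pt lam \<rho>" using pt_Suc_le[OF plam r1] .
    ultimately have "(col, Suc \<rho>) \<in> strip" using in_strip c1 by auto
    hence "(col, Suc \<rho>) = (col, \<rho>)" using strip_col_unique[OF _ inS] by simp
    then show False by simp
  qed
qed

lemma card_strip_list_row_before:
  assumes i: "i < length strip_list" and ci: "strip_list ! i = (col, \<rho>)"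
  shows "card {t. t < i \<and> snd (strip_list ! t) = \<rho>} = pt lamp \<rho> - col"
proof -
  have r1: "1 \<le> \<rho>" and c1: "pt lam \<rho> < col" using strip_cell_facts[OF i ci] by simp_all
  let ?A = "{t. t < i \<and> snd (strip_list ! t) = \<rho>}"
  let ?B = "{c'. col < c' \<and> c' \<le> pt lamp \<rho>}"
  have inj: "inj_on (\<lambda>t. fst (strip_list ! t)) ?A"
  proof (rule inj_onI)
    fix t1 t2 assume t1: "t1 \<in> ?A" and t2: "t2 \<in> ?A" and e: "fst (strip_list ! t1) = fst (strip_list ! t2)"
    have "strip_list ! t1 = strip_list ! t2" using t1 t2 e by (simp add: prod_eq_iff)
    moreover have "t1 < length strip_list" "t2 < length strip_list" using t1 t2 i by auto
    ultimately show "t1 = t2" using nth_eq_iff_index_eq[OF distinct_strip_list] by blast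
  qed
  have img: "(\<lambda>t. fst (strip_list ! t)) ` ?A = ?B"
  proof
    show "(\<lambda>t. fst (strip_list ! t)) ` ?A \<subseteq> ?B"
    proof
      fix c' assume "c' \<in> (\<lambda>t. fst (strip_list ! t)) ` ?A"
      then obtain t where t: "t < i" "snd (strip_list ! t) = \<rho>" "c' = fst (strip_list ! t)" by auto
      have "col < c'" using strip_list_col_dec[OF t(1) i] ci t(3) by simp
      moreover have "strip_list ! t \<in> strip" using strip_list_in t(1) i by simp
      hence "(fst (strip_list ! t), snd (strip_list ! t)) \<in> strip" by simp
      hence "c' \<le> pt lamp \<rho>" using t in_strip[of "fst (strip_list ! t)" "snd (strip_list ! t)"] by blast
      ultimately show "c' \<in> ?B" by simp
    qed
    show "?B \<subseteq> (\<lambda>t. fst (strip_list ! t)) ` ?A"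
    proof
      fix c' assume "c' \<in> ?B"
      hence c': "col < c'" "c' \<le> pt lamp \<rho>" by auto
      have "(c', \<rho>) \<in> strip" using in_strip c' c1 r1 by auto
      hence "(c', \<rho>) \<in> set strip_list" using set_strip_list by simp
      then obtain t where t: "t < length strip_list" "strip_list ! t = (c', \<rho>)" by (auto simp: in_set_conv_nth)
      have "t < i"
      proof (rule ccontr)
        assume "\<not> t < i"
        hence "i < t \<or> i = t" by auto
        thus False
        proof
          assume "i < t" hence "fst (strip_list ! t) < fst (strip_list ! i)" using strip_list_col_dec t(1) by blast
          thus False using t(2) ci c' by simp
        next
          assume "i = t" thus False using t(2) ci c' by simp
        qed
      qed
      have tA: "t \<in> ?A" using \<open>t < i\<close> t by simp
      show "c' \<in> (\<lambda>t. fst (strip_list ! t)) ` ?A" by (rule rev_image_eqI[OF tA]) (use t in simp)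
    qed
  qed
  have "card ?A = card ?B" using card_image[OF inj] img by simp
  also have "?B = {Suc col..pt lamp \<rho>}" by auto
  also have "card \<dots> = pt lamp \<rho> - col" by simp
  finally show "card ?A = pt lamp \<rho> - col" .
qed

end

lemma card_less_Suc_conj: "card {t. t < Suc i \<and> P t} = card {t. t < i \<and> P t} + (if P i then 1 else 0)"
proof -
  have "{t. t < Suc i \<and> P t} = {t. t < i \<and> P t} \<union> (if P i then {i} else {})" by (auto simp: less_Suc_eq)
  then show ?thesis by auto
qed

section \<open>The downward slide\<close>

primrec slide_tab :: "tab \<Rightarrow> (nat \<times> nat) list \<Rightarrow> nat \<Rightarrow> tab" where
  "slide_tab T cs 0 = T"
| "slide_tab T cs (Suc i) = fst (rev_corner (slide_tab T cs i) (cs ! i))"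

lemma slide_tab_Cons: "slide_tab T (c # cs) (Suc i) = slide_tab (fst (rev_corner T c)) cs i"
  by (induction i) auto

lemma length_slide_steps: "length (slide_steps T cs) = length cs"
  by (induction cs arbitrary: T) (auto split: prod.splits)

lemma nth_slide_steps:
  "i < length cs \<Longrightarrow> slide_steps T cs ! i = (slide_tab T cs (Suc i), snd (snd (rev_corner (slide_tab T cs i) (cs ! i))),
     fst (snd (rev_corner (slide_tab T cs i) (cs ! i))), bump_path (slide_tab T cs i) (slide_tab T cs (Suc i)))"
proof (induction cs arbitrary: T i)
  case Nil then show ?case by simp
next
  case (Cons c cs)
  obtain T' l k where rc: "rev_corner T c = (T', l, k)" by (metis prod.exhaust)
  show ?case
  proof (cases i)
    case 0 then show ?thesis using rc by simp
  next
    case (Suc i')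
    have "slide_steps T (c # cs) ! i = slide_steps T' cs ! i'" using rc Suc by simp
    also have "\<dots> = (slide_tab T' cs (Suc i'), snd (snd (rev_corner (slide_tab T' cs i') (cs ! i'))),
     fst (snd (rev_corner (slide_tab T' cs i') (cs ! i'))), bump_path (slide_tab T' cs i') (slide_tab T' cs (Suc i')))"
      using Cons.IH[of i' T'] Cons.prems Suc by simp
    finally show ?thesis using Suc rc slide_tab_Cons[of T c cs] by (cases i') simp_all
  qed
qed

lemma sorted_rev_map:
  assumes "\<And>a. Suc a < n \<Longrightarrow> f (Suc a) \<le> (f a :: nat)"
  shows "sorted (rev (map f [0..<n]))"
proof -
  have g: "\<And>a b. a \<le> b \<Longrightarrow> b < n \<Longrightarrow> f b \<le> f a"
  proof -
    fix a b assume ab: "a \<le> b" "b < n"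
    thus "f b \<le> f a"
    proof (induction b rule: dec_induct)
      case base then show ?case by simp
    next
      case (step k) then show ?case using assms[of k] by simp
    qed
  qed
  show ?thesis unfolding sorted_iff_nth_mono
  proof (intro allI impI)
    fix i j assume ij: "i \<le> j" "j < length (rev (map f [0..<n]))"
    have "rev (map f [0..<n]) ! i = f (n - Suc i)" "rev (map f [0..<n]) ! j = f (n - Suc j)"
      using ij by (simp_all add: rev_nth)
    then show "rev (map f [0..<n]) ! i \<le> rev (map f [0..<n]) ! j" using g[of "n - Suc j" "n - Suc i"] ij by simp
  qed
qed

locale slide_setting =
  fixes lam mu lamp mum :: "nat list" and T :: tab
  assumes pl: "is_partition lam" and pmu: "is_partition mu" and plp: "is_partition lamp" and pmm: "is_partition mum"
    and musub: "diagram mu \<subseteq> diagram lam" and hs: "hstrip lamp lam" and vs: "vstrip mu mum"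
    and sh: "ssyt_of_shape T lamp mum"
begin

text \<open>Indices are shifted against the paper: tab_at i is T_i, and the (i+1)-st reverse insertion
  produces the value k_{i+1} = bumped i, which lands in row land_row i.\<close>

abbreviation "cells \<equiv> strip_list lamp lam"

abbreviation "tab_at i \<equiv> slide_tab T cells i"

definition land_row :: "nat \<Rightarrow> nat" where "land_row i = fst (snd (rev_corner (tab_at i) (cells ! i)))"

definition bumped :: "nat \<Rightarrow> nat" where "bumped i = snd (snd (rev_corner (tab_at i) (cells ! i)))"

definition removed :: "nat \<Rightarrow> nat \<Rightarrow> nat" where "removed i j = card {t. t < i \<and> snd (cells ! t) = j}"

lemma rev_corner_tab_at: "rev_corner (tab_at i) (cells ! i) = (tab_at (Suc i), land_row i, bumped i)"
  by (simp add: land_row_def bumped_def)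

lemma wf_tab_T: "wf_tab T" using wf_tab_if_ssyt_of_shape[OF sh plp pmm] .

lemma shape_T: "\<And>j. 1 \<le> j \<Longrightarrow> row_start T j = pt mum j \<and> row_end T j = pt lamp j"
  using sh unfolding ssyt_of_shape_def by auto

lemma mum_le: "\<And>j. 1 \<le> j \<Longrightarrow> pt mum j \<le> pt lam j"
proof -
  fix j :: nat assume j: "1 \<le> j"
  have "diagram mum \<subseteq> diagram mu" using vs unfolding vstrip_def by blast
  then show "pt mum j \<le> pt lam j" using pt_mono_diagram[OF _ j] pt_mono_diagram[OF musub j] by (meson le_trans)
qed

definition removal_inv :: "nat \<Rightarrow> bool" where
  "removal_inv i \<longleftrightarrow> wf_tab (tab_at i) \<and>
     (\<forall>j\<ge>1. row_end (tab_at i) j = pt lamp j - removed i j) \<and> (\<forall>j\<ge>1. pt lam j \<le> row_end (tab_at i) j)"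

lemma corner_props:
  assumes i: "i < length cells" and inv: "removal_inv i" and bv: "\<forall>j\<ge>1. row_start (tab_at i) j = pt mum j"
  shows "1 \<le> snd (cells ! i)" "row_entries (tab_at i) (snd (cells ! i)) \<noteq> []"
    "row_end (tab_at i) (Suc (snd (cells ! i))) < row_end (tab_at i) (snd (cells ! i))"
    "row_end (tab_at i) (snd (cells ! i)) = fst (cells ! i)" "pt lam (snd (cells ! i)) < fst (cells ! i)"
proof -
  obtain col \<rho> where ci: "cells ! i = (col, \<rho>)" by fastforce
  note cf = strip_cell_facts[OF hs plp pl i ci]
  have r1: "1 \<le> \<rho>" using cf by simp
  have olr: "row_end (tab_at i) \<rho> = col"
    using inv card_strip_list_row_before[OF hs plp pl i ci] r1 cf(3) unfolding removal_inv_def removed_def by simp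
  have ol2: "row_end (tab_at i) (Suc \<rho>) < col" using inv cf(4) unfolding removal_inv_def by (metis diff_le_self le_add1 order.strict_trans1 plus_1_eq_Suc)
  have "row_start (tab_at i) \<rho> = pt mum \<rho>" using bv r1 by simp
  also have "\<dots> < col" using mum_le[OF r1] cf(2) by simp
  finally have "row_entries (tab_at i) \<rho> \<noteq> []" using olr by auto
  then show "1 \<le> snd (cells ! i)" "row_entries (tab_at i) (snd (cells ! i)) \<noteq> []"
    "row_end (tab_at i) (Suc (snd (cells ! i))) < row_end (tab_at i) (snd (cells ! i))"
    "row_end (tab_at i) (snd (cells ! i)) = fst (cells ! i)" "pt lam (snd (cells ! i)) < fst (cells ! i)"
    using ci r1 olr ol2 cf(2) by auto
qed

lemma slide_step:
  assumes i: "i < length cells" and inv: "removal_inv i" and bv: "\<forall>j\<ge>1. row_start (tab_at i) j = pt mum j"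
  shows "removal_inv (Suc i)"
    "\<forall>j\<ge>1. row_start (tab_at (Suc i)) j = pt mum j - (if j = land_row i then 1 else 0)"
    "1 \<le> land_row i \<Longrightarrow> 1 \<le> row_start (tab_at i) (land_row i)"
    "1 \<le> land_row i \<Longrightarrow> rowof (tab_at (Suc i)) (land_row i) =
       (row_start (tab_at i) (land_row i) - 1, bumped i # row_entries (tab_at i) (land_row i))"
    "\<forall>j<land_row i. rowof (tab_at (Suc i)) j = rowof (tab_at i) j"
    "land_row i = 0 \<Longrightarrow> same_rows (ins (bumped i) 1 (tab_at (Suc i))) (tab_at i)"
    "1 \<le> land_row i \<Longrightarrow> same_rows (ins (bumped i) (Suc (land_row i))
       (setrow (land_row i) (rowof (tab_at i) (land_row i)) (tab_at (Suc i)))) (tab_at i)"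
    "land_row i = 0 \<Longrightarrow> \<forall>j\<ge>1. length (row_entries (tab_at i) j) =
       length (row_entries (tab_at (Suc i)) j) + (if j = snd (cells ! i) then 1 else 0)"
proof -
  obtain col \<rho> where ci: "cells ! i = (col, \<rho>)" by fastforce
  note ca = corner_props[OF i inv bv]
  have r1: "1 \<le> \<rho>" and cor: "row_end (tab_at i) (Suc \<rho>) < row_end (tab_at i) \<rho>"
    and olr: "row_end (tab_at i) \<rho> = col" and lc: "pt lam \<rho> < col" using ca ci by auto
  obtain b R where br: "rowof (tab_at i) \<rho> = (b, R)" by fastforce
  have R: "R \<noteq> []" using ca ci br by simp
  have rc: "rev_corner (tab_at i) (col, \<rho>) = (tab_at (Suc i), land_row i, bumped i)"
    using rev_corner_tab_at[of i] ci by simp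
  have gi: "wf_tab (tab_at i)" using inv by (simp add: removal_inv_def)
  have G: "wf_tab (tab_at (Suc i))" "1 \<le> land_row i \<Longrightarrow> 1 \<le> row_start (tab_at i) (land_row i)"
    using wf_tab_rev_corner[OF gi r1 br R, of col] cor rc by simp_all
  note P = rev_corner_rows[OF r1 br R rc]
  show "1 \<le> land_row i \<Longrightarrow> 1 \<le> row_start (tab_at i) (land_row i)" by (rule G(2))
  show land: "1 \<le> land_row i \<Longrightarrow> rowof (tab_at (Suc i)) (land_row i) =
       (row_start (tab_at i) (land_row i) - 1, bumped i # row_entries (tab_at i) (land_row i))" by (rule P(7))
  show "\<forall>j<land_row i. rowof (tab_at (Suc i)) j = rowof (tab_at i) j" using P(2) by simp
  show "\<forall>j\<ge>1. row_start (tab_at (Suc i)) j = pt mum j - (if j = land_row i then 1 else 0)"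
    using P(4) land bv by auto
  have ol: "\<And>j. 1 \<le> j \<Longrightarrow> row_end (tab_at (Suc i)) j = row_end (tab_at i) j - (if j = \<rho> then 1 else 0)"
    by (rule rev_corner_row_end[OF r1 br R rc G(2)])
  have removed_Suc: "\<And>j. removed (Suc i) j = removed i j + (if \<rho> = j then 1 else 0)"
    unfolding removed_def using card_less_Suc_conj[of i "\<lambda>t. snd (cells ! t) = _"] ci by simp
  have "pt lam j \<le> row_end (tab_at (Suc i)) j" if "1 \<le> j" for j
    using ol[OF that] inv that olr lc unfolding removal_inv_def by (cases "j = \<rho>") auto
  then show "removal_inv (Suc i)"
    using G(1) ol removed_Suc inv unfolding removal_inv_def by auto
  show "land_row i = 0 \<Longrightarrow> same_rows (ins (bumped i) 1 (tab_at (Suc i))) (tab_at i)"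
    using ins_rev_corner_exit[OF wf_tab_rows_sorted[OF gi] r1 br R] rc by simp
  show "1 \<le> land_row i \<Longrightarrow> same_rows (ins (bumped i) (Suc (land_row i))
       (setrow (land_row i) (rowof (tab_at i) (land_row i)) (tab_at (Suc i)))) (tab_at i)"
    by (rule ins_rev_corner_land[OF wf_tab_rows_sorted[OF gi] r1 br R rc])
  show "land_row i = 0 \<Longrightarrow> \<forall>j\<ge>1. length (row_entries (tab_at i) j) =
       length (row_entries (tab_at (Suc i)) j) + (if j = snd (cells ! i) then 1 else 0)"
    using P(1,5,6) br R ci by (auto simp: length_butlast)
qed

lemma removal_inv_exit:
  "i \<le> length cells \<Longrightarrow> (\<forall>t<i. land_row t = 0) \<Longrightarrow> removal_inv i \<and> (\<forall>j\<ge>1. row_start (tab_at i) j = pt mum j)"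
proof (induction i)
  case 0
  have lsub: "diagram lam \<subseteq> diagram lamp" using hs unfolding hstrip_def by blast
  show ?case unfolding removal_inv_def removed_def
  proof (intro conjI allI impI)
    fix j :: nat assume j: "1 \<le> j"
    show "row_end (tab_at 0) j = pt lamp j - card {t. t < 0 \<and> snd (cells ! t) = j}"
      "row_start (tab_at 0) j = pt mum j" using shape_T[OF j] by simp_all
    show "pt lam j \<le> row_end (tab_at 0) j" using shape_T[OF j] pt_mono_diagram[OF lsub j] by simp
  qed (use wf_tab_T in simp)
next
  case (Suc i)
  then have "removal_inv i" "\<forall>j\<ge>1. row_start (tab_at i) j = pt mum j" "i < length cells" "land_row i = 0"
    by auto
  then show ?case using slide_step(1,2) by simp
qed

lemma ins_bumped_exit:
  assumes "i < length cells" "\<forall>t\<le>i. land_row t = 0"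
  shows "same_rows (ins (bumped i) 1 (tab_at (Suc i))) (tab_at i)"
  using slide_step(6)[OF assms(1)] removal_inv_exit[of i] assms by simp

lemma same_rows_ins_list_bumped:
  "s \<le> length cells \<Longrightarrow> (\<forall>t<s. land_row t = 0) \<Longrightarrow> same_rows T (ins_list (map bumped (rev [0..<s])) 1 (tab_at s))"
proof (induction s)
  case 0 then show ?case by (simp add: ins_list_def)
next
  case (Suc s)
  have IH: "same_rows T (ins_list (map bumped (rev [0..<s])) 1 (tab_at s))" using Suc by simp
  have "same_rows (ins (bumped s) 1 (tab_at (Suc s))) (tab_at s)" using ins_bumped_exit[of s] Suc.prems by simp
  then have "same_rows (ins_list (map bumped (rev [0..<s])) 1 (tab_at s))
      (ins_list (map bumped (rev [0..<Suc s])) 1 (tab_at (Suc s)))"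
    using same_rows_ins_list same_rows_sym by (simp add: ins_list_Cons)
  then show ?case using IH same_rows_trans by blast
qed

lemma bumped_pos:
  assumes "i < length cells" "\<forall>t\<le>i. land_row t = 0"
  shows "0 < bumped i"
proof -
  have "bumped i \<in> set (row_entries (ins (bumped i) 1 (tab_at (Suc i))) 1)"
    using rowof_ins[of 1 1 "bumped i" "tab_at (Suc i)"] in_bump_row by simp
  then have "bumped i \<in> set (row_entries (tab_at i) 1)" using same_rowsD[OF ins_bumped_exit[OF assms], of 1] by simp
  then show ?thesis using wf_tabD(2)[of "tab_at i" 1] removal_inv_exit[of i] assms unfolding removal_inv_def by auto
qed

lemma bumped_antimono:
  assumes a: "Suc a < length cells" "\<forall>t\<le>Suc a. land_row t = 0"
  shows "bumped (Suc a) \<le> bumped a"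
proof -
  have ex: "\<forall>t<Suc (Suc a). land_row t = 0" using a(2) by (simp add: less_Suc_eq_le)
  have ia: "removal_inv a" "\<forall>j\<ge>1. row_start (tab_at a) j = pt mum j"
    and ib: "removal_inv (Suc a)" "\<forall>j\<ge>1. row_start (tab_at (Suc a)) j = pt mum j"
    and ic: "removal_inv (Suc (Suc a))"
    using removal_inv_exit[of a] removal_inv_exit[of "Suc a"] removal_inv_exit[of "Suc (Suc a)"] a(1) ex
    by (auto simp del: slide_tab.simps)
  have sX: "rows_sorted (tab_at (Suc (Suc a)))" using ic wf_tab_rows_sorted unfolding removal_inv_def by blast
  have r01: "snd (cells ! a) \<le> snd (cells ! Suc a)" using strip_list_row_mono[OF hs plp pl, of a "Suc a"] a by simp
  have r0: "1 \<le> snd (cells ! a)" using corner_props[of a] ia a by simp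
  show ?thesis
    by (rule bumped_antimono_core[OF sX ins_bumped_exit[of "Suc a"] ins_bumped_exit[of a] r0 r01
          slide_step(8)[OF _ ib] slide_step(8)[OF _ ia]]) (use a in auto)
qed

lemma sorted_bumped: "i \<le> length cells \<Longrightarrow> \<forall>t<i. land_row t = 0 \<Longrightarrow> sorted (rev (map bumped [0..<i]))"
  by (rule sorted_rev_map) (simp add: bumped_antimono)

lemma landing_shape:
  assumes i: "i < length cells" and ex: "\<forall>t<i. land_row t = 0" and l1: "1 \<le> land_row i"
  defines "D \<equiv> ins_list (map bumped (rev [0..<i])) 1 (tab_at (Suc i))"
  shows "wf_tab D \<and> (\<forall>j\<ge>1. pt lam j \<le> row_end D j \<and> row_end D j \<le> pt lamp j) \<and>
    (\<forall>j\<ge>1. row_start D j = pt mum j - (if j = land_row i then 1 else 0))"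
proof -
  have "removal_inv i" "\<forall>j\<ge>1. row_start (tab_at i) j = pt mum j" using removal_inv_exit i ex by auto
  note S = slide_step[OF i this]
  define P where "P = tab_at (Suc i)"
  define r where "r = land_row i"
  define e where "e = bumped i"
  define R0 where "R0 = row_entries (tab_at i) r"
  define w where "w = map bumped (rev [0..<i])"
  have D: "D = ins_list w 1 P" unfolding D_def w_def P_def ..
  have invP: "wf_tab P" "\<forall>j\<ge>1. pt lam j \<le> row_end P j" using S(1) unfolding removal_inv_def P_def by auto
  have r1: "1 \<le> r" using l1 r_def by simp
  have rowP: "rowof P r = (row_start (tab_at i) r - 1, e # R0)" using S(4)[OF l1] unfolding P_def r_def e_def R0_def .
  have RvP: "row_entries P r = e # R0" using rowP by simp
  have BvP: "rowof (tab_at i) r = (row_start P r + 1, R0)" using rowP S(3)[OF l1] unfolding r_def R0_def by simp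
  have e0: "0 < e" using wf_tabD(2)[OF invP(1) r1] RvP by simp
  have ws: "sorted w" using sorted_bumped[of i] i ex unfolding w_def by (simp add: rev_map)
  have "\<forall>x\<in>set w. 0 < x"
  proof
    fix x assume "x \<in> set w"
    then obtain t where "t < i" "x = bumped t" unfolding w_def by auto
    then show "0 < x" using bumped_pos[of t] i ex by simp
  qed
  then have wfD: "wf_tab D" unfolding D by (rule wf_tab_ins_list[OF invP(1)])
  have start: "\<And>j. row_start D j = row_start P j" unfolding D by (simp add: row_start_ins_list)
  have lower: "pt lam j \<le> row_end D j" if j: "1 \<le> j" for j
  proof -
    have "pt lam j \<le> row_end P j" using invP(2) j by simp
    also have "\<dots> \<le> row_end D j" using length_row_ins_list_ge[of 1 P j w] start[of j] unfolding D by simp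
    finally show ?thesis .
  qed
  have "same_rows (ins e (Suc r) (setrow r (row_start P r + 1, R0) P)) (tab_at i)"
    using S(7)[OF l1] BvP unfolding P_def r_def e_def by simp
  then have "same_rows (ins_list w 1 (tab_at i)) (ins_list w 1 (ins e (Suc r) (setrow r (row_start P r + 1, R0) P)))"
    using same_rows_ins_list same_rows_sym by blast
  moreover have "same_rows T (ins_list w 1 (tab_at i))" using same_rows_ins_list_bumped[of i] i ex unfolding w_def by simp
  ultimately have T: "same_rows T (ins_list w 1 (ins e (Suc r) (setrow r (row_start P r + 1, R0) P)))"
    using same_rows_trans by blast
  have upper: "row_end D j \<le> pt lamp j" if j: "1 \<le> j" for j
  proof -
    have "row_end D j \<le> row_end (ins_list w 1 (ins e (Suc r) (setrow r (row_start P r + 1, R0) P))) j"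
      using row_end_ins_list_le[OF wf_tab_rows_sorted[OF invP(1)] r1 RvP e0 ws] j unfolding D by blast
    also have "\<dots> = row_end T j" using same_rowsD[OF T, of j] by simp
    also have "\<dots> = pt lamp j" using shape_T[OF j] by simp
    finally show ?thesis .
  qed
  show ?thesis using wfD lower upper start S(2) unfolding P_def by simp
qed

text \<open>The cell vacated by the landing reverse insertion is the lowest cell of the bumping path.\<close>

lemma landing_row_clear:
  assumes i: "i < length cells" and ex: "\<forall>t<i. land_row t = 0" and l1: "1 \<le> land_row i"
    and er: "exits_right (bump_path (tab_at i) (tab_at (Suc i))) mu mum"
  shows "\<forall>d\<in>diagram mu - diagram mum. snd d \<noteq> land_row i"
proof -
  have "removal_inv i" "\<forall>j\<ge>1. row_start (tab_at i) j = pt mum j" using removal_inv_exit i ex by auto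
  note S = slide_step[OF i this]
  define Q where "Q = tab_at i"
  define P where "P = tab_at (Suc i)"
  define r where "r = land_row i"
  have r1: "1 \<le> r" using l1 r_def by simp
  have rowP: "rowof P r = (row_start Q r - 1, bumped i # row_entries Q r)"
    using S(4)[OF l1] unfolding P_def r_def Q_def .
  have b1: "1 \<le> row_start Q r" using S(3)[OF l1] unfolding Q_def r_def .
  let ?B = "bump_path Q P"
  have Lin: "(row_start Q r, r) \<in> ?B"
  proof -
    have "cellmap Q (row_start Q r, r) = None" by (simp add: cellmap_eq)
    moreover have "cellmap P (row_start Q r, r) \<noteq> None" using rowP r1 b1 by (simp add: cellmap_eq)
    ultimately show ?thesis unfolding bump_path_def by auto
  qed
  have low: "r \<le> snd c" if c: "c \<in> ?B" for c
  proof (rule ccontr)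
    assume "\<not> r \<le> snd c"
    then have "rowof P (snd c) = rowof Q (snd c)" using S(5) unfolding P_def Q_def r_def by simp
    then have "cellmap P (fst c, snd c) = cellmap Q (fst c, snd c)" by (rule cellmap_rowof)
    then show False using c unfolding bump_path_def by simp
  qed
  obtain c where c: "c \<in> ?B" "\<forall>c'\<in>?B. snd c \<le> snd c'" "\<forall>d\<in>diagram mu - diagram mum. snd c < snd d"
    using er unfolding exits_right_def Q_def P_def by blast
  have "snd c = r" using c(2) Lin low[OF c(1)] by force
  then show ?thesis using c(3) r_def by force
qed

lemma steps_eq: "steps lamp lam T = slide_steps T cells" by (simp add: steps_def strip_list_def[OF hs plp pl])

lemma length_steps: "length (steps lamp lam T) = length cells" by (simp add: steps_eq length_slide_steps)

lemma step_nth: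
  assumes "1 \<le> i" "i \<le> length cells"
  shows "step_row lamp lam T i = land_row (i - 1)" "step_val lamp lam T i = bumped (i - 1)"
    "step_tab lamp lam T i = tab_at i" "step_path lamp lam T i = bump_path (tab_at (i - 1)) (tab_at i)"
proof -
  have lt: "i - 1 < length cells" using assms by simp
  have e: "steps lamp lam T ! (i - 1) = (tab_at i, bumped (i - 1), land_row (i - 1), bump_path (tab_at (i - 1)) (tab_at i))"
    using nth_slide_steps[OF lt, of T] assms(1) by (simp add: steps_eq land_row_def bumped_def)
  show "step_row lamp lam T i = land_row (i - 1)" using e by (simp add: step_row_def)
  show "step_val lamp lam T i = bumped (i - 1)" using e by (simp add: step_val_def)
  show "step_tab lamp lam T i = tab_at i" using e assms(1) by (simp add: step_tab_def)
  show "step_path lamp lam T i = bump_path (tab_at (i - 1)) (tab_at i)" using e by (simp add: step_path_def)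
qed

lemma step_tab_0: "step_tab lamp lam T 0 = tab_at 0" by (simp add: step_tab_def)

lemma map_step_val: "n \<le> length cells \<Longrightarrow> map (step_val lamp lam T) (rev [1..<Suc n]) = map bumped (rev [0..<n])"
proof -
  assume n: "n \<le> length cells"
  have "[1..<Suc n] = map Suc [0..<n]" by (simp add: map_Suc_upt)
  hence "map (step_val lamp lam T) (rev [1..<Suc n]) = map (step_val lamp lam T \<circ> Suc) (rev [0..<n])"
    by (simp add: rev_map)
  also have "\<dots> = map bumped (rev [0..<n])"
    by (rule map_cong) (use n step_nth(2) in auto)
  finally show ?thesis .
qed

lemma down_m_path:
  assumes "has_down_path lamp lam T"
  shows "1 \<le> down_m lamp lam T" "down_m lamp lam T \<le> length cells"
    "1 \<le> land_row (down_m lamp lam T - 1)" "\<forall>t < down_m lamp lam T - 1. land_row t = 0"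
    "down_m' lamp lam T = down_m lamp lam T - 1"
proof -
  let ?P = "\<lambda>i. 1 \<le> i \<and> i \<le> length (steps lamp lam T) \<and> 1 \<le> step_row lamp lam T i"
  have m: "down_m lamp lam T = (LEAST i. ?P i)" using assms unfolding down_m_def by simp
  have "?P (down_m lamp lam T)" unfolding m by (rule LeastI_ex) (use assms in \<open>simp add: has_down_path_def\<close>)
  then show m1: "1 \<le> down_m lamp lam T" and mle: "down_m lamp lam T \<le> length cells"
    and "1 \<le> land_row (down_m lamp lam T - 1)" using step_nth(1) length_steps by auto
  show "\<forall>t < down_m lamp lam T - 1. land_row t = 0"
  proof (intro allI impI)
    fix t assume t: "t < down_m lamp lam T - 1"
    show "land_row t = 0"
    proof (rule ccontr)
      assume "land_row t \<noteq> 0"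
      then have "?P (Suc t)" using t mle step_nth(1)[of "Suc t"] length_steps by simp
      then have "down_m lamp lam T \<le> Suc t" unfolding m by (rule Least_le)
      then show False using t by simp
    qed
  qed
  show "down_m' lamp lam T = down_m lamp lam T - 1" using assms by (simp add: down_m'_def)
qed

lemma no_down_path:
  assumes "\<not> has_down_path lamp lam T"
  shows "\<forall>t < length cells. land_row t = 0"
    "down_m lamp lam T = length cells" "down_m' lamp lam T = length cells"
proof -
  show "\<forall>t < length cells. land_row t = 0"
  proof (intro allI impI)
    fix t assume t: "t < length cells"
    show "land_row t = 0"
    proof (rule ccontr)
      assume "land_row t \<noteq> 0"
      then have "has_down_path lamp lam T" unfolding has_down_path_def
        using t step_nth(1)[of "Suc t"] length_steps by (intro exI[of _ "Suc t"]) simp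
      then show False using assms by simp
    qed
  qed
  show "down_m lamp lam T = length cells" "down_m' lamp lam T = length cells"
    using assms length_steps unfolding down_m_def down_m'_def by auto
qed

lemma down_slide_ins_list:
  "down_slide lamp lam T = ins_list (map bumped (rev [0..<down_m' lamp lam T])) 1 (tab_at (down_m lamp lam T))"
proof -
  have m': "down_m' lamp lam T \<le> length cells" and m: "down_m lamp lam T \<le> length cells"
    using down_m_path no_down_path by (cases "has_down_path lamp lam T"; force)+
  have "step_tab lamp lam T (down_m lamp lam T) = tab_at (down_m lamp lam T)"
    using step_nth(3)[OF _ m] step_tab_0 by (cases "down_m lamp lam T = 0") auto
  then show ?thesis unfolding down_slide_def foldl_ext_ins map_step_val[OF m'] by simp
qed

lemma down_slide_shape:
  assumes pc: "has_down_path lamp lam T \<longrightarrow> exits_right (down_path lamp lam T) mu mum"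
  shows "wf_tab (down_slide lamp lam T) \<and>
    (\<forall>j\<ge>1. pt lam j \<le> row_end (down_slide lamp lam T) j \<and> row_end (down_slide lamp lam T) j \<le> pt lamp j) \<and>
    ((\<forall>j\<ge>1. row_start (down_slide lamp lam T) j = pt mum j) \<or>
     (\<exists>r\<ge>1. (\<forall>d\<in>diagram mu - diagram mum. snd d \<noteq> r) \<and>
        (\<forall>j\<ge>1. row_start (down_slide lamp lam T) j = pt mum j - (if j = r then 1 else 0))))"
proof (cases "has_down_path lamp lam T")
  case True
  note M = down_m_path[OF True]
  define i where "i = down_m lamp lam T - 1"
  have m: "down_m lamp lam T = Suc i" using M(1) unfolding i_def by simp
  have i: "i < length cells" "\<forall>t<i. land_row t = 0" "1 \<le> land_row i" using M m unfolding i_def by auto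
  have "exits_right (bump_path (tab_at i) (tab_at (Suc i))) mu mum"
    using pc True step_nth(4)[OF M(1,2)] unfolding down_path_def m by simp
  moreover have "down_m' lamp lam T = i" using M(5) m by simp
  ultimately show ?thesis
    using landing_shape[OF i] landing_row_clear[OF i] i(3) unfolding down_slide_ins_list m by blast
next
  case False
  note M = no_down_path[OF False]
  have te: "same_rows T (down_slide lamp lam T)"
    unfolding down_slide_ins_list M(2,3) using same_rows_ins_list_bumped[OF le_refl M(1)] .
  have "diagram lam \<subseteq> diagram lamp" using hs unfolding hstrip_def by blast
  then show ?thesis
    using wf_tab_same_rows[OF te wf_tab_T] same_rowsD[OF te] shape_T pt_mono_diagram by fastforce
qed

end

theorem proposition5p3:
  fixes lam mu lamp mum :: "nat list" and T :: tab
  assumes "is_partition lam" and "is_partition mu"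
    and "is_partition lamp" and "is_partition mum"
    and "diagram mu \<subseteq> diagram lam"
    and "hstrip lamp lam" and "vstrip mu mum"
    and "ssyt_of_shape T lamp mum"
    and "has_down_path lamp lam T \<longrightarrow> exits_right (down_path lamp lam T) mu mum"
  shows "\<exists>lam' mu'. is_partition lam' \<and> is_partition mu' \<and>
           ssyt_of_shape (down_slide lamp lam T) lam' mu' \<and>
           hstrip lam' lam \<and> vstrip mu mu'"
proof -
  interpret slide_setting lam mu lamp mum T by unfold_locales (use assms in auto)
  let ?D = "down_slide lamp lam T"
  note D = down_slide_shape[OF assms(9)]
  obtain lam' mu' where shape: "is_partition lam'" "is_partition mu'" "ssyt_of_shape ?D lam' mu'"
    "\<forall>j\<ge>1. pt lam' j = row_end ?D j" "\<forall>j\<ge>1. pt mu' j = row_start ?D j"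
    using shape_of_wf_tab D by blast
  have "hstrip lam' lam"
    by (rule hstrip_between[OF assms(6)]) (use D shape(4) in \<open>auto intro!: diagram_mono\<close>)
  moreover have "vstrip mu mu'"
    using D
  proof (elim conjE disjE exE)
    assume "\<forall>j\<ge>1. row_start ?D j = pt mum j"
    then have "diagram mu' = diagram mum" using shape(5) by (intro diagram_eq) simp
    then show ?thesis using assms(7) unfolding vstrip_def by simp
  next
    fix r assume "1 \<le> r" "\<forall>d\<in>diagram mu - diagram mum. snd d \<noteq> r"
      "\<forall>j\<ge>1. row_start ?D j = pt mum j - (if j = r then 1 else 0)"
    then show ?thesis using vstrip_remove_cell[OF assms(7)] shape(5) by simp
  qed
  ultimately show ?thesis using shape(1-3) by blast
qed

end
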